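(* Let $[\Lambda^k,r]$ be a Lagrangian manifold with complex germ, $\tau$ a point of it, and define $$M_{ij}(\tau)=\big((C+iB)(\tau)(C-iB)^{-1}(\tau)\big)_{ij}-\sum_{a,b=1}^k\frac{\partial\phi_i}{\partial\tau_a}W_{ab}(\tau)\frac{\partial\phi_j}{\partial\tau_b},$$ where $W(\tau)$ is the inverse of the $k\times k$ matrix $\sum_{i=1}^\infty\frac{\partial\phi_i^*}{\partial\tau_a}\frac{\partial\phi_i}{\partial\tau_b}$. Then (1) $M$ is a Hilbert–Schmidt operator on $l^2$; (2) $\|M\|<1$; (3) $\sum_{j=1}^\infty M_{ij}\,\partial\phi_j^*/\partial\tau_a=0$ for $a=1,\dots,k$ and all $i$.
   Context: $l^2$: complex square-summable sequences; infinite matrices are operators on $l^2$; $X^T$, $X^+$ transpose and adjoint. An isotropic manifold is a $k$-dimensional surface $\Lambda^k=\{P=P(\tau),Q=Q(\tau)\}$ in the space of pairs of real square-summable sequences $P=(P_1,P_2,\dots)$, $Q=(Q_1,Q_2,\dots)$, with local coordinates $\tau=(\tau_1,\dots,\tau_k)$, such that (m1) all partial $\tau$-derivatives of all orders of $P_j,Q_j$ exist and are square-summable in $j$; (m2) if $\sum_j[(\sum_m\frac{\partial P_j}{\partial\tau_m}\xi_m)^2+(\sum_m\frac{\partial Q_j}{\partial\tau_m}\xi_m)^2]=0$ for real $\xi_m$ then all $\xi_m=0$; (m3) $\sum_j(\frac{\partial P_j}{\partial\tau_m}\frac{\partial Q_j}{\partial\tau_n}-\frac{\partial P_j}{\partial\tau_n}\frac{\partial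 Q_j}{\partial\tau_m})=0$ for all $m,n$. Let $M^k$ be its universal cover. A complex germ assigns to each $\tau\in M^k$ infinite complex matrices $B(\tau)=(B_{ij}),C(\tau)=(C_{ij})$, $i,j\ge1$, such that (r1) if $\tau',\tau''$ project to the same point of $\Lambda^k$ there is a unitary $A$ with $B(\tau'')=B(\tau')A$, $C(\tau'')=C(\tau')A$; (r2) $B_{ia}=\partial P_i/\partial\tau_a$, $C_{ia}=\partial Q_i/\partial\tau_a$ for $a=1,\dots,k$; (r3) $B^TC-C^TB=0$; (r4) $C^+B-B^+C=iL$ where $L$ is diagonal with first $k$ diagonal entries $0$ and all others $1$; (r5) all $\tau$-derivatives of $F=(C+iB)/\sqrt2$ and $G=(C-iB)/\sqrt2$ exist, those of $G$ are bounded operators and those of $F$ are Hilbert–Schmidt; (r6) $(C-iB)/\sqrt2$ has a bounded inverse. The pair is a Lagrangian manifold with complex germ. $\phi_l(\tau)=(Q_l(\tau)+iP_l(\tau))/\sqrt2$. *)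

theory Defs
  imports "HOL-Analysis.Analysis"
begin

section \<open>Sequences in l2 and infinite matrices (indices start at 0)\<close>

definition l2 :: "(nat \<Rightarrow> 'b::real_normed_vector) \<Rightarrow> bool" where
  "l2 x \<longleftrightarrow> summable (\<lambda>j. (norm (x j))\<^sup>2)"

definition l2norm :: "(nat \<Rightarrow> complex) \<Rightarrow> real" where
  "l2norm x = sqrt (\<Sum>j. (cmod (x j))\<^sup>2)"

type_synonym imat = "nat \<Rightarrow> nat \<Rightarrow> complex"

definition mat_apply :: "imat \<Rightarrow> (nat \<Rightarrow> complex) \<Rightarrow> (nat \<Rightarrow> complex)" where
  "mat_apply X x = (\<lambda>i. \<Sum>j. X i j * x j)"

definition bounded_op :: "imat \<Rightarrow> bool" where
  "bounded_op X \<longleftrightarrow> (\<exists>c. \<forall>x. l2 x \<longrightarrow>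
      (\<forall>i. summable (\<lambda>j. X i j * x j)) \<and> l2 (mat_apply X x) \<and>
      l2norm (mat_apply X x) \<le> c * l2norm x)"

definition hilbert_schmidt :: "imat \<Rightarrow> bool" where
  "hilbert_schmidt X \<longleftrightarrow> (\<lambda>(i, j). (cmod (X i j))\<^sup>2) summable_on (UNIV :: (nat \<times> nat) set)"

definition op_norm :: "imat \<Rightarrow> real" where
  "op_norm X = Sup {l2norm (mat_apply X x) | x. l2 x \<and> l2norm x \<le> 1}"

definition is_bounded_inverse :: "imat \<Rightarrow> imat \<Rightarrow> bool" where
  "is_bounded_inverse X Y \<longleftrightarrow> bounded_op X \<and> bounded_op Y \<and>
     (\<forall>x. l2 x \<longrightarrow> mat_apply X (mat_apply Y x) = x \<and> mat_apply Y (mat_apply X x) = x)"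

definition has_bounded_inverse :: "imat \<Rightarrow> bool" where
  "has_bounded_inverse X \<longleftrightarrow> (\<exists>Y. is_bounded_inverse X Y)"

definition binv :: "imat \<Rightarrow> imat" where
  "binv X = (SOME Y. is_bounded_inverse X Y)"

definition imat_mult :: "imat \<Rightarrow> imat \<Rightarrow> imat" where
  "imat_mult X Y = (\<lambda>i j. \<Sum>l. X i l * Y l j)"

definition is_fin_inverse :: "nat \<Rightarrow> imat \<Rightarrow> imat \<Rightarrow> bool" where
  "is_fin_inverse k N W \<longleftrightarrow>
     (\<forall>a<k. \<forall>b<k. (\<Sum>c<k. N a c * W c b) = (if a = b then 1 else 0)) \<and>
     (\<forall>a<k. \<forall>b<k. (\<Sum>c<k. W a c * N c b) = (if a = b then 1 else 0))"

definition fin_inv :: "nat \<Rightarrow> imat \<Rightarrow> imat" where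
  "fin_inv k N = (SOME W. is_fin_inverse k N W)"

definition pd :: "'n::real_normed_vector \<Rightarrow> ('n \<Rightarrow> 'b::real_normed_vector) \<Rightarrow> 'n \<Rightarrow> 'b" where
  "pd v f \<tau> = vector_derivative (\<lambda>t::real. f (\<tau> + t *\<^sub>R v)) (at 0)"

fun ipd :: "'n::real_normed_vector list \<Rightarrow> ('n \<Rightarrow> 'b::real_normed_vector) \<Rightarrow> 'n \<Rightarrow> 'b" where
  "ipd [] f = f"
| "ipd (v # vs) f = pd v (ipd vs f)"

text \<open>Coordinate direction number a (a < k) of R^k = real^'k, via the enumeration e.\<close>
definition cdir :: "('k::finite \<Rightarrow> nat) \<Rightarrow> nat \<Rightarrow> real^'k" where
  "cdir e a = axis (inv_into UNIV e a) 1"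

definition smooth_on :: "'n::euclidean_space set \<Rightarrow> ('n \<Rightarrow> 'b::real_normed_vector) \<Rightarrow> bool" where
  "smooth_on U f \<longleftrightarrow> (\<forall>vs \<in> lists Basis. \<forall>v \<in> Basis. \<forall>\<tau> \<in> U.
      (\<lambda>t::real. ipd vs f (\<tau> + t *\<^sub>R v)) differentiable (at 0))"

section \<open>Lagrangian manifold with complex germ (one chart)\<close>

definition lag_germ ::
  "('k::finite \<Rightarrow> nat) \<Rightarrow> (real^'k) set \<Rightarrow> (real^'k \<Rightarrow> nat \<Rightarrow> real) \<Rightarrow> (real^'k \<Rightarrow> nat \<Rightarrow> real)
    \<Rightarrow> (real^'k \<Rightarrow> imat) \<Rightarrow> (real^'k \<Rightarrow> imat) \<Rightarrow> bool" where
  "lag_germ e U P Q B C \<longleftrightarrow>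
    (let k = CARD('k);
         dP = (\<lambda>a j \<tau>. pd (cdir e a) (\<lambda>\<sigma>. P \<sigma> j) \<tau>);
         dQ = (\<lambda>a j \<tau>. pd (cdir e a) (\<lambda>\<sigma>. Q \<sigma> j) \<tau>);
         F = (\<lambda>\<tau> i j. (C \<tau> i j + \<i> * B \<tau> i j) / complex_of_real (sqrt 2));
         G = (\<lambda>\<tau> i j. (C \<tau> i j - \<i> * B \<tau> i j) / complex_of_real (sqrt 2))
     in
    \<comment> \<open>chart: e enumerates the coordinates, U open\<close>
    bij_betw e UNIV {..<k} \<and> open U \<and>
    \<comment> \<open>(m1)\<close>
    (\<forall>j. smooth_on U (\<lambda>\<sigma>. P \<sigma> j) \<and> smooth_on U (\<lambda>\<sigma>. Q \<sigma> j)) \<and>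
    (\<forall>vs \<in> lists Basis. \<forall>\<tau> \<in> U.
        l2 (\<lambda>j. ipd vs (\<lambda>\<sigma>. P \<sigma> j) \<tau>) \<and> l2 (\<lambda>j. ipd vs (\<lambda>\<sigma>. Q \<sigma> j) \<tau>)) \<and>
    \<comment> \<open>(m2)\<close>
    (\<forall>\<tau> \<in> U. \<forall>\<xi>::nat \<Rightarrow> real.
        (\<Sum>j. (\<Sum>a<k. dP a j \<tau> * \<xi> a)\<^sup>2 + (\<Sum>a<k. dQ a j \<tau> * \<xi> a)\<^sup>2) = 0
          \<longrightarrow> (\<forall>a<k. \<xi> a = 0)) \<and>
    \<comment> \<open>(m3)\<close>
    (\<forall>\<tau> \<in> U. \<forall>m<k. \<forall>n<k. (\<Sum>j. dP m j \<tau> * dQ n j \<tau> - dP n j \<tau> * dQ m j \<tau>) = 0) \<and>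
    \<comment> \<open>(r2)\<close>
    (\<forall>\<tau> \<in> U. \<forall>i. \<forall>a<k. B \<tau> i a = complex_of_real (dP a i \<tau>) \<and>
                          C \<tau> i a = complex_of_real (dQ a i \<tau>)) \<and>
    \<comment> \<open>(r3) B^T C - C^T B = 0\<close>
    (\<forall>\<tau> \<in> U. \<forall>i j. (\<Sum>l. B \<tau> l i * C \<tau> l j - C \<tau> l i * B \<tau> l j) = 0) \<and>
    \<comment> \<open>(r4) C^+ B - B^+ C = i L\<close>
    (\<forall>\<tau> \<in> U. \<forall>i j. (\<Sum>l. cnj (C \<tau> l i) * B \<tau> l j - cnj (B \<tau> l i) * C \<tau> l j)
                     = \<i> * (if i = j \<and> k \<le> i then 1 else 0)) \<and>
    \<comment> \<open>(r5)\<close>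
    (\<forall>i j. smooth_on U (\<lambda>\<sigma>. F \<sigma> i j) \<and> smooth_on U (\<lambda>\<sigma>. G \<sigma> i j)) \<and>
    (\<forall>vs \<in> lists Basis. \<forall>\<tau> \<in> U.
        bounded_op (\<lambda>i j. ipd vs (\<lambda>\<sigma>. G \<sigma> i j) \<tau>) \<and>
        hilbert_schmidt (\<lambda>i j. ipd vs (\<lambda>\<sigma>. F \<sigma> i j) \<tau>)) \<and>
    \<comment> \<open>(r6)\<close>
    (\<forall>\<tau> \<in> U. has_bounded_inverse (G \<tau>)))"


definition phi :: "(real^'k \<Rightarrow> nat \<Rightarrow> real) \<Rightarrow> (real^'k \<Rightarrow> nat \<Rightarrow> real) \<Rightarrow> real^'k \<Rightarrow> nat \<Rightarrow> complex" where
  "phi P Q \<tau> l = (complex_of_real (Q \<tau> l) + \<i> * complex_of_real (P \<tau> l)) / complex_of_real (sqrt 2)"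

definition dphi :: "('k::finite \<Rightarrow> nat) \<Rightarrow> (real^'k \<Rightarrow> nat \<Rightarrow> real) \<Rightarrow> (real^'k \<Rightarrow> nat \<Rightarrow> real)
    \<Rightarrow> nat \<Rightarrow> nat \<Rightarrow> real^'k \<Rightarrow> complex" where
  "dphi e P Q a i \<tau> = pd (cdir e a) (\<lambda>\<sigma>. phi P Q \<sigma> i) \<tau>"

definition Wmat :: "('k::finite \<Rightarrow> nat) \<Rightarrow> (real^'k \<Rightarrow> nat \<Rightarrow> real) \<Rightarrow> (real^'k \<Rightarrow> nat \<Rightarrow> real)
    \<Rightarrow> real^'k \<Rightarrow> imat" where
  "Wmat e P Q \<tau> = fin_inv CARD('k) (\<lambda>a b. \<Sum>i. cnj (dphi e P Q a i \<tau>) * dphi e P Q b i \<tau>)"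

definition Mmat :: "('k::finite \<Rightarrow> nat) \<Rightarrow> (real^'k \<Rightarrow> nat \<Rightarrow> real) \<Rightarrow> (real^'k \<Rightarrow> nat \<Rightarrow> real)
    \<Rightarrow> (real^'k \<Rightarrow> imat) \<Rightarrow> (real^'k \<Rightarrow> imat) \<Rightarrow> real^'k \<Rightarrow> imat" where
  "Mmat e P Q B C \<tau> = (\<lambda>i j.
     imat_mult (\<lambda>i j. C \<tau> i j + \<i> * B \<tau> i j) (binv (\<lambda>i j. C \<tau> i j - \<i> * B \<tau> i j)) i j
     - (\<Sum>a<CARD('k). \<Sum>b<CARD('k). dphi e P Q a i \<tau> * Wmat e P Q \<tau> a b * dphi e P Q b j \<tau>))"

end

theory Submission
  imports Defs
begin

text \<open>Write \<open>X = C + iB\<close> and \<open>Y = C - iB\<close> at the point \<open>\<tau>\<close>. The first \<open>k\<close> columns of \<open>X\<close> are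
  \<open>\<surd>2 \<partial>\<phi>/\<partial>\<tau>\<^sub>a\<close>, and \<open>M = XY\<^sup>-\<^sup>1 - \<Pi>\<close> with \<open>\<Pi>\<close> of finite rank; as \<open>X\<close> is Hilbert--Schmidt
  and \<open>Y\<^sup>-\<^sup>1\<close> bounded, \<open>M\<close> is Hilbert--Schmidt.

  Condition (r4) says \<open>Y\<^sup>+Y = X\<^sup>+X + 2L\<close>. On the first \<open>k\<close> columns the two Gram matrices agree, so
  for \<open>y = Yx\<close> the pairing \<open>\<Sum>\<^sub>j \<partial>\<phi>\<^sub>j/\<partial>\<tau>\<^sub>b y\<^sub>j\<close> is the Hermitian product of \<open>\<partial>\<phi>/\<partial>\<tau>\<^sub>b\<close> with \<open>Xx\<close>.
  As \<open>W\<close> inverts the Gram matrix of the \<open>\<partial>\<phi>/\<partial>\<tau>\<^sub>a\<close>, this makes \<open>My\<close> the residual of \<open>Xx\<close>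
  after orthogonal projection onto their span. In particular \<open>conj (\<partial>\<phi>/\<partial>\<tau>\<^sub>c) = Y e\<^sub>c/\<surd>2\<close> is sent
  to the residual of \<open>\<partial>\<phi>/\<partial>\<tau>\<^sub>c\<close>, which is zero.

  For the norm, let \<open>t\<close> be \<open>x\<close> with its first \<open>k\<close> entries replaced by zero. Then
  \<open>\<parallel>y\<parallel>\<^sup>2 = \<parallel>Xx\<parallel>\<^sup>2 + 2\<parallel>t\<parallel>\<^sup>2\<close>, and since \<open>Xx - Xt\<close> lies in the span, \<open>My\<close> is also the residual of
  \<open>Xt\<close>. Hence \<open>\<parallel>My\<parallel>\<^sup>2 \<le> min \<parallel>Xx\<parallel>\<^sup>2 (K\<parallel>t\<parallel>\<^sup>2)\<close>, \<open>K\<close> the squared Hilbert--Schmidt norm of \<open>X\<close>,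
  which gives \<open>\<parallel>My\<parallel>\<^sup>2 \<le> (K + 1)/(K + 3) \<parallel>y\<parallel>\<^sup>2\<close>.\<close>

section \<open>Square-summable sequences\<close>

definition l2norm_sq :: "(nat \<Rightarrow> complex) \<Rightarrow> real" where
  "l2norm_sq x = (\<Sum>j. (cmod (x j))\<^sup>2)"

definition l2_inner :: "(nat \<Rightarrow> complex) \<Rightarrow> (nat \<Rightarrow> complex) \<Rightarrow> complex" where
  "l2_inner u v = (\<Sum>j. cnj (u j) * v j)"

definition unit_seq :: "nat \<Rightarrow> nat \<Rightarrow> complex" where
  "unit_seq b = (\<lambda>j. if j = b then 1 else 0)"

definition trunc_seq :: "nat \<Rightarrow> (nat \<Rightarrow> complex) \<Rightarrow> nat \<Rightarrow> complex" where
  "trunc_seq n x = (\<lambda>j. if j < n then x j else 0)"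

definition tail_seq :: "nat \<Rightarrow> (nat \<Rightarrow> complex) \<Rightarrow> nat \<Rightarrow> complex" where
  "tail_seq n x = (\<lambda>j. if j < n then 0 else x j)"

lemma l2norm_eq_sqrt: "l2norm x = sqrt (l2norm_sq x)"
  by (simp add: l2norm_def l2norm_sq_def)

lemma l2_sums: "l2 x \<Longrightarrow> (\<lambda>j. (cmod (x j))\<^sup>2) sums l2norm_sq x" for x :: "nat \<Rightarrow> complex"
  unfolding l2_def l2norm_sq_def by (simp add: summable_sums)

lemma l2norm_sq_nonneg: "l2 x \<Longrightarrow> 0 \<le> l2norm_sq x" for x :: "nat \<Rightarrow> complex"
  unfolding l2norm_sq_def l2_def by (rule suminf_nonneg) auto

lemma l2norm_nonneg: "l2 x \<Longrightarrow> 0 \<le> l2norm x"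
  by (simp add: l2norm_eq_sqrt l2norm_sq_nonneg)

lemma l2_finite_support: "(\<And>j. n \<le> j \<Longrightarrow> x j = 0) \<Longrightarrow> l2 x" for x :: "nat \<Rightarrow> complex"
  unfolding l2_def by (rule summable_finite[of "{..<n}"]) auto

lemma l2_trunc_seq: "l2 (trunc_seq n x)"
  by (rule l2_finite_support[of n]) (auto simp: trunc_seq_def)

lemma l2_unit_seq: "l2 (unit_seq b)"
  by (rule l2_finite_support[of "Suc b"]) (auto simp: unit_seq_def)

lemma l2_zero: "l2 (\<lambda>j. 0 :: complex)"
  by (rule l2_finite_support[of 0]) auto

lemma l2_cnj: "l2 x \<Longrightarrow> l2 (\<lambda>j. cnj (x j))" for x :: "nat \<Rightarrow> complex"
  by (simp add: l2_def)

lemma l2_scale: "l2 x \<Longrightarrow> l2 (\<lambda>j. c * x j)" for x :: "nat \<Rightarrow> complex"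
  unfolding l2_def by (simp add: norm_mult power_mult_distrib summable_mult)

lemma l2_scale_right: "l2 x \<Longrightarrow> l2 (\<lambda>j. x j * c)" for x :: "nat \<Rightarrow> complex"
  using l2_scale[of x c] by (simp add: mult.commute)

lemma cmod_add_squared_le: "(cmod (a + b))\<^sup>2 \<le> 2 * (cmod a)\<^sup>2 + 2 * (cmod b)\<^sup>2"
proof -
  have "(cmod (a + b))\<^sup>2 \<le> (cmod a + cmod b)\<^sup>2"
    by (simp add: power_mono norm_triangle_ineq)
  also have "\<dots> \<le> 2 * (cmod a)\<^sup>2 + 2 * (cmod b)\<^sup>2"
    using sum_squares_bound[of "cmod a" "cmod b"] by (simp add: power2_sum)
  finally show ?thesis .
qed

lemma l2_add: "l2 x \<Longrightarrow> l2 y \<Longrightarrow> l2 (\<lambda>j. x j + y j)" for x y :: "nat \<Rightarrow> complex"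
  unfolding l2_def
  by (rule summable_comparison_test'[where g="\<lambda>j. 2 * (cmod (x j))\<^sup>2 + 2 * (cmod (y j))\<^sup>2" and N=0])
     (auto intro!: summable_add summable_mult cmod_add_squared_le)

lemma l2_diff: "l2 x \<Longrightarrow> l2 y \<Longrightarrow> l2 (\<lambda>j. x j - y j)" for x y :: "nat \<Rightarrow> complex"
  using l2_add[of x "\<lambda>j. (-1) * y j"] l2_scale[of y "-1"] by simp

lemma l2_sum:
  "finite I \<Longrightarrow> (\<And>a. a \<in> I \<Longrightarrow> l2 (x a)) \<Longrightarrow> l2 (\<lambda>j. \<Sum>a\<in>I. x a j)"
  for x :: "_ \<Rightarrow> nat \<Rightarrow> complex"
  by (induction I rule: finite_induct) (simp_all add: l2_zero l2_add)

lemma l2_tail_seq: "l2 x \<Longrightarrow> l2 (tail_seq n x)"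
  unfolding l2_def tail_seq_def
  by (rule summable_comparison_test'[where N=0]) auto

lemma summable_norm_mult_l2: "l2 x \<Longrightarrow> l2 y \<Longrightarrow> summable (\<lambda>j. cmod (x j * y j))"
  for x y :: "nat \<Rightarrow> complex"
  unfolding l2_def
  by (rule summable_comparison_test'[where g="\<lambda>j. ((cmod (x j))\<^sup>2 + (cmod (y j))\<^sup>2) / 2" and N=0])
     (auto intro!: summable_divide summable_add simp: norm_mult
           intro: order.trans[OF _ sum_squares_bound])

lemma summable_mult_l2: "l2 x \<Longrightarrow> l2 y \<Longrightarrow> summable (\<lambda>j. x j * y j)" for x y :: "nat \<Rightarrow> complex"
  by (rule summable_norm_cancel[OF summable_norm_mult_l2])

lemma l2_Cauchy_Schwarz:
  fixes x y :: "nat \<Rightarrow> complex"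
  assumes x: "l2 x" and y: "l2 y"
  shows "cmod (\<Sum>j. x j * y j) \<le> l2norm x * l2norm y"
proof -
  have s: "summable (\<lambda>j. cmod (x j * y j))" by (rule summable_norm_mult_l2[OF x y])
  have partial_le: "L2_set (\<lambda>j. cmod (z j)) {..<n} \<le> l2norm z" if "l2 z" for z :: "nat \<Rightarrow> complex" and n
    unfolding L2_set_def l2norm_def using that unfolding l2_def
    by (intro real_sqrt_le_mono sum_le_suminf) auto
  have "cmod (\<Sum>j. x j * y j) \<le> (\<Sum>j. cmod (x j * y j))" by (rule summable_norm[OF s])
  also have "\<dots> \<le> l2norm x * l2norm y"
  proof (rule suminf_le_const[OF s])
    fix n
    have "(\<Sum>j<n. cmod (x j * y j)) = (\<Sum>j<n. \<bar>cmod (x j)\<bar> * \<bar>cmod (y j)\<bar>)"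
      by (simp add: norm_mult)
    also have "\<dots> \<le> L2_set (\<lambda>j. cmod (x j)) {..<n} * L2_set (\<lambda>j. cmod (y j)) {..<n}"
      by (rule L2_set_mult_ineq)
    also have "\<dots> \<le> l2norm x * l2norm y"
      by (intro mult_mono partial_le x y l2norm_nonneg L2_set_nonneg)
    finally show "(\<Sum>j<n. cmod (x j * y j)) \<le> l2norm x * l2norm y" .
  qed
  finally show ?thesis .
qed

lemma l2norm_sq_eq_inner: "l2 x \<Longrightarrow> complex_of_real (l2norm_sq x) = l2_inner x x"
proof -
  assume "l2 x"
  hence "(\<lambda>j. complex_of_real ((cmod (x j))\<^sup>2)) sums complex_of_real (l2norm_sq x)"
    by (rule sums_of_real_iff[THEN iffD2, OF l2_sums])
  moreover have "complex_of_real ((cmod (x j))\<^sup>2) = cnj (x j) * x j" for j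
    using complex_norm_square[of "x j"] by (simp add: mult.commute del: of_real_power)
  ultimately show ?thesis by (simp add: sums_unique l2_inner_def)
qed

lemma l2norm_sq_trunc_seq: "l2norm_sq (trunc_seq n x) = (\<Sum>j<n. (cmod (x j))\<^sup>2)"
  unfolding l2norm_sq_def by (subst suminf_finite[of "{..<n}"]) (auto simp: trunc_seq_def)

lemma l2norm_sq_tail_seq_tendsto_0:
  fixes x :: "nat \<Rightarrow> complex"
  assumes "l2 x"
  shows "(\<lambda>n. l2norm_sq (tail_seq n x)) \<longlonglongrightarrow> 0"
proof -
  have s: "summable (\<lambda>j. (cmod (x j))\<^sup>2)" using assms by (simp add: l2_def)
  have "l2norm_sq (tail_seq n x) = l2norm_sq x - l2norm_sq (trunc_seq n x)" for n
  proof -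
    have "(\<lambda>j. (cmod (tail_seq n x j))\<^sup>2) = (\<lambda>j. (cmod (x j))\<^sup>2 - (cmod (trunc_seq n x j))\<^sup>2)"
      by (auto simp: tail_seq_def trunc_seq_def)
    moreover have "summable (\<lambda>j. (cmod (trunc_seq n x j))\<^sup>2)"
      using l2_trunc_seq by (simp add: l2_def)
    ultimately show ?thesis unfolding l2norm_sq_def using suminf_diff[OF s] by metis
  qed
  moreover have "(\<lambda>n. l2norm_sq (trunc_seq n x)) \<longlonglongrightarrow> l2norm_sq x"
    using summable_LIMSEQ[OF s] by (simp add: l2norm_sq_trunc_seq l2norm_sq_def[of x])
  hence "(\<lambda>n. l2norm_sq x - l2norm_sq (trunc_seq n x)) \<longlonglongrightarrow> l2norm_sq x - l2norm_sq x"
    by (intro tendsto_diff tendsto_const)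
  ultimately show ?thesis by simp
qed

lemma l2norm_sq_eq_0_iff: "l2 x \<Longrightarrow> l2norm_sq x = 0 \<longleftrightarrow> (\<forall>j. x j = 0)"
  unfolding l2norm_sq_def l2_def using suminf_eq_zero_iff[of "\<lambda>j. (cmod (x j))\<^sup>2"] by simp

lemma l2norm_sq_scale: "l2 x \<Longrightarrow> l2norm_sq (\<lambda>j. c * x j) = (cmod c)\<^sup>2 * l2norm_sq x"
  unfolding l2norm_sq_def l2_def by (simp add: norm_mult power_mult_distrib suminf_mult)

lemma l2norm_sq_add_orthogonal:
  assumes u: "l2 u" and v: "l2 v" and orth: "Re (l2_inner u v) = 0"
  shows "l2norm_sq (\<lambda>j. u j + v j) = l2norm_sq u + l2norm_sq v"
proof -
  have pw: "(cmod (u j + v j))\<^sup>2 = (cmod (u j))\<^sup>2 + (cmod (v j))\<^sup>2 + 2 * Re (cnj (u j) * v j)" for j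
    by (simp add: cmod_power2 power2_sum algebra_simps)
  have su: "summable (\<lambda>j. (cmod (u j))\<^sup>2)" and sv: "summable (\<lambda>j. (cmod (v j))\<^sup>2)"
    using u v by (simp_all add: l2_def)
  have sc: "summable (\<lambda>j. cnj (u j) * v j)" by (rule summable_mult_l2[OF l2_cnj[OF u] v])
  have "(\<lambda>j. 2 * Re (cnj (u j) * v j)) sums (2 * Re (l2_inner u v))"
    unfolding l2_inner_def by (intro sums_mult sums_Re summable_sums[OF sc])
  hence "(\<lambda>j. 2 * Re (cnj (u j) * v j)) sums 0" using orth by simp
  hence "(\<lambda>j. (cmod (u j + v j))\<^sup>2) sums (l2norm_sq u + l2norm_sq v + 0)"
    unfolding pw by (intro sums_add l2_sums u v)
  thus ?thesis unfolding l2norm_sq_def by (simp add: sums_iff)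
qed

lemma l2_inner_diff_right:
  "l2 u \<Longrightarrow> l2 v \<Longrightarrow> l2 w \<Longrightarrow> l2_inner u (\<lambda>j. v j - w j) = l2_inner u v - l2_inner u w"
  unfolding l2_inner_def
  by (simp add: right_diff_distrib suminf_diff[OF summable_mult_l2[OF l2_cnj] summable_mult_l2[OF l2_cnj]])

lemma l2_inner_add_left:
  "l2 u \<Longrightarrow> l2 v \<Longrightarrow> l2 w \<Longrightarrow> l2_inner (\<lambda>j. u j + v j) w = l2_inner u w + l2_inner v w"
  unfolding l2_inner_def
  by (simp add: distrib_right suminf_add[OF summable_mult_l2[OF l2_cnj] summable_mult_l2[OF l2_cnj]])

lemma l2_inner_scale_left: "l2 u \<Longrightarrow> l2 w \<Longrightarrow> l2_inner (\<lambda>j. c * u j) w = cnj c * l2_inner u w"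
  unfolding l2_inner_def by (simp add: suminf_mult[OF summable_mult_l2[OF l2_cnj]] mult.assoc)

lemma l2_inner_sum_right:
  fixes f :: "nat \<Rightarrow> nat \<Rightarrow> complex"
  assumes "l2 u" "\<And>a. a < k \<Longrightarrow> l2 (f a)"
  shows "l2_inner u (\<lambda>j. \<Sum>a<k. f a j * d a) = (\<Sum>a<k. d a * l2_inner u (f a))"
proof -
  have s: "summable (\<lambda>j. cnj (u j) * f a j)" if "a < k" for a
    by (rule summable_mult_l2[OF l2_cnj[OF assms(1)] assms(2)[OF that]])
  have "l2_inner u (\<lambda>j. \<Sum>a<k. f a j * d a) = (\<Sum>j. \<Sum>a<k. d a * (cnj (u j) * f a j))"
    unfolding l2_inner_def by (simp add: sum_distrib_left mult_ac)
  also have "\<dots> = (\<Sum>a<k. \<Sum>j. d a * (cnj (u j) * f a j))"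
    by (rule suminf_sum) (simp add: summable_mult s)
  also have "\<dots> = (\<Sum>a<k. d a * l2_inner u (f a))"
    unfolding l2_inner_def by (intro sum.cong refl suminf_mult s) simp
  finally show ?thesis .
qed

lemma l2_inner_sum_left:
  fixes f :: "nat \<Rightarrow> nat \<Rightarrow> complex"
  assumes "l2 u" "\<And>a. a < k \<Longrightarrow> l2 (f a)"
  shows "l2_inner (\<lambda>j. \<Sum>a<k. f a j * d a) u = (\<Sum>a<k. cnj (d a) * l2_inner (f a) u)"
proof -
  have s: "summable (\<lambda>j. cnj (f a j) * u j)" if "a < k" for a
    by (rule summable_mult_l2[OF l2_cnj[OF assms(2)[OF that]] assms(1)])
  have "l2_inner (\<lambda>j. \<Sum>a<k. f a j * d a) u = (\<Sum>j. \<Sum>a<k. cnj (d a) * (cnj (f a j) * u j))"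
    unfolding l2_inner_def by (simp add: sum_distrib_right sum_distrib_left mult_ac)
  also have "\<dots> = (\<Sum>a<k. \<Sum>j. cnj (d a) * (cnj (f a j) * u j))"
    by (rule suminf_sum) (simp add: summable_mult s)
  also have "\<dots> = (\<Sum>a<k. cnj (d a) * l2_inner (f a) u)"
    unfolding l2_inner_def by (intro sum.cong refl suminf_mult s) simp
  finally show ?thesis .
qed

section \<open>Bounded operators\<close>

lemma bounded_opE:
  assumes "bounded_op T"
  obtains c where "c \<ge> 0" "\<And>x. l2 x \<Longrightarrow> (\<forall>i. summable (\<lambda>j. T i j * x j)) \<and>
      l2 (mat_apply T x) \<and> l2norm (mat_apply T x) \<le> c * l2norm x"
proof -
  from assms obtain c where c: "\<And>x. l2 x \<Longrightarrow> (\<forall>i. summable (\<lambda>j. T i j * x j)) \<and>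
      l2 (mat_apply T x) \<and> l2norm (mat_apply T x) \<le> c * l2norm x"
    unfolding bounded_op_def by blast
  have "c * l2norm x \<le> max c 0 * l2norm x" if "l2 x" for x
    by (simp add: mult_right_mono l2norm_nonneg[OF that])
  with c that[of "max c 0"] show ?thesis by fastforce
qed

lemma bounded_op_summable: "bounded_op T \<Longrightarrow> l2 x \<Longrightarrow> summable (\<lambda>j. T i j * x j)"
  by (metis bounded_opE)

lemma bounded_op_l2: "bounded_op T \<Longrightarrow> l2 x \<Longrightarrow> l2 (mat_apply T x)"
  by (metis bounded_opE)

lemma bounded_op_bound:
  assumes "bounded_op T"
  obtains c where "c \<ge> 0" "\<And>x. l2 x \<Longrightarrow> l2norm (mat_apply T x) \<le> c * l2norm x"
  using bounded_opE[OF assms] by metis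

lemma mat_apply_unit_seq: "mat_apply T (unit_seq b) = (\<lambda>i. T i b)"
proof
  fix i
  have "(\<Sum>j. T i j * unit_seq b j) = (\<Sum>j\<in>{b}. T i j * unit_seq b j)"
    by (rule suminf_finite) (auto simp: unit_seq_def)
  thus "mat_apply T (unit_seq b) i = T i b" by (simp add: mat_apply_def unit_seq_def)
qed

lemma mat_apply_trunc_seq: "mat_apply T (trunc_seq n x) i = (\<Sum>l<n. T i l * x l)"
proof -
  have "(\<Sum>j. T i j * trunc_seq n x j) = (\<Sum>j\<in>{..<n}. T i j * trunc_seq n x j)"
    by (rule suminf_finite) (auto simp: trunc_seq_def)
  thus ?thesis by (simp add: mat_apply_def trunc_seq_def)
qed

lemma mat_apply_zero: "mat_apply T (\<lambda>j. 0) = (\<lambda>i. 0)"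
  by (simp add: mat_apply_def)

lemma bounded_op_col: "bounded_op T \<Longrightarrow> l2 (\<lambda>i. T i b)"
  using bounded_op_l2[OF _ l2_unit_seq, of T b] by (simp add: mat_apply_unit_seq)

lemma mat_apply_diff:
  assumes "bounded_op T" "l2 x" "l2 y"
  shows "mat_apply T (\<lambda>j. x j - y j) i = mat_apply T x i - mat_apply T y i"
proof -
  have "(\<Sum>j. T i j * x j) - (\<Sum>j. T i j * y j) = (\<Sum>j. T i j * x j - T i j * y j)"
    by (rule suminf_diff) (use bounded_op_summable assms in blast)+
  thus ?thesis by (simp add: mat_apply_def right_diff_distrib)
qed

lemma mat_apply_scale:
  assumes "bounded_op T" "l2 x"
  shows "mat_apply T (\<lambda>j. c * x j) = (\<lambda>i. c * mat_apply T x i)"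
  unfolding mat_apply_def
  using suminf_mult[OF bounded_op_summable[OF assms], of c] by (simp add: mult_ac)

lemma mat_apply_scale_op:
  assumes "bounded_op T" "l2 x"
  shows "mat_apply (\<lambda>i j. c * T i j) x = (\<lambda>i. c * mat_apply T x i)"
  unfolding mat_apply_def
  using suminf_mult[OF bounded_op_summable[OF assms], of c] by (simp add: mult_ac)

lemma bounded_op_scale:
  assumes T: "bounded_op T"
  shows "bounded_op (\<lambda>i j. c * T i j)"
proof -
  obtain d where d: "\<And>x. l2 x \<Longrightarrow> l2norm (mat_apply T x) \<le> d * l2norm x"
    using bounded_op_bound[OF T] by metis
  show ?thesis unfolding bounded_op_def
  proof (intro exI allI impI conjI)
    fix x :: "nat \<Rightarrow> complex" assume x: "l2 x"
    note eq = mat_apply_scale_op[OF T x]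
    show "summable (\<lambda>j. c * T i j * x j)" for i
      using summable_mult[OF bounded_op_summable[OF T x, of i], of c] by (simp add: mult_ac)
    show "l2 (mat_apply (\<lambda>i j. c * T i j) x)" unfolding eq by (rule l2_scale[OF bounded_op_l2[OF T x]])
    have "l2norm (mat_apply (\<lambda>i j. c * T i j) x) = cmod c * l2norm (mat_apply T x)"
      unfolding eq l2norm_eq_sqrt l2norm_sq_scale[OF bounded_op_l2[OF T x]] by (simp add: real_sqrt_mult)
    also have "\<dots> \<le> cmod c * (d * l2norm x)" by (rule mult_left_mono[OF d[OF x]]) simp
    finally show "l2norm (mat_apply (\<lambda>i j. c * T i j) x) \<le> (cmod c * d) * l2norm x"
      by (simp add: mult_ac)
  qed
qed

lemma transpose_apply_partial_sum:
  assumes T: "bounded_op T" and u: "l2 u"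
  shows "(\<Sum>l<n. mat_apply (\<lambda>i j. T j i) u l * x l) = (\<Sum>j. u j * mat_apply T (trunc_seq n x) j)"
proof -
  have s: "summable (\<lambda>j. T j l * u j)" for l by (rule summable_mult_l2[OF bounded_op_col[OF T] u])
  have "(\<Sum>l<n. mat_apply (\<lambda>i j. T j i) u l * x l) = (\<Sum>l<n. \<Sum>j. T j l * u j * x l)"
    by (simp add: mat_apply_def suminf_mult2[OF s])
  also have "\<dots> = (\<Sum>j. \<Sum>l<n. T j l * u j * x l)"
    by (rule suminf_sum[symmetric]) (rule summable_mult2[OF s])
  also have "\<dots> = (\<Sum>j. u j * mat_apply T (trunc_seq n x) j)"
    by (simp add: mat_apply_trunc_seq sum_distrib_left mult_ac)
  finally show ?thesis .
qed

text \<open>Duality: the partial sums of \<open>\<parallel>T\<^sup>T u\<parallel>\<^sup>2\<close> are pairings of \<open>u\<close> with \<open>T\<close> applied to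
  truncations of \<open>conj (T\<^sup>T u)\<close>.\<close>

lemma transpose_apply_partial_norm_le:
  assumes T: "bounded_op T" and u: "l2 u" and c0: "c \<ge> 0"
    and c: "\<And>x. l2 x \<Longrightarrow> l2norm (mat_apply T x) \<le> c * l2norm x"
  shows "(\<Sum>l<n. (cmod (mat_apply (\<lambda>i j. T j i) u l))\<^sup>2) \<le> (c * l2norm u)\<^sup>2"
proof -
  define v where "v = mat_apply (\<lambda>i j. T j i) u"
  define S where "S = (\<Sum>l<n. (cmod (v l))\<^sup>2)"
  define w where "w = trunc_seq n (\<lambda>l. cnj (v l))"
  have S0: "0 \<le> S" unfolding S_def by (intro sum_nonneg) auto
  have "complex_of_real S = (\<Sum>l<n. v l * cnj (v l))"
    unfolding S_def of_real_sum by (simp add: complex_norm_square del: of_real_power)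
  also have "\<dots> = (\<Sum>j. u j * mat_apply T w j)"
    unfolding v_def w_def by (rule transpose_apply_partial_sum[OF T u])
  finally have "S \<le> l2norm u * l2norm (mat_apply T w)"
    using l2_Cauchy_Schwarz[OF u bounded_op_l2[OF T l2_trunc_seq]] S0 w_def by (metis norm_of_real abs_of_nonneg)
  also have "\<dots> \<le> l2norm u * (c * l2norm w)"
    unfolding w_def by (rule mult_left_mono[OF c[OF l2_trunc_seq] l2norm_nonneg[OF u]])
  also have "l2norm w = sqrt S" by (simp add: l2norm_eq_sqrt l2norm_sq_trunc_seq S_def w_def)
  finally have le: "sqrt S * sqrt S \<le> (c * l2norm u) * sqrt S" using S0 by (simp add: mult_ac)
  have "sqrt S \<le> c * l2norm u"
  proof (cases "S = 0")
    case False
    with S0 have "0 < sqrt S" by simp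
    with le show ?thesis by (rule mult_right_le_imp_le)
  qed (use c0 l2norm_nonneg[OF u] in simp)
  thus ?thesis using S0 power_mono[of "sqrt S" "c * l2norm u" 2] by (simp add: S_def v_def)
qed

lemma transpose_apply_bound:
  assumes T: "bounded_op T" and u: "l2 u" and c0: "c \<ge> 0"
    and c: "\<And>x. l2 x \<Longrightarrow> l2norm (mat_apply T x) \<le> c * l2norm x"
  shows "l2 (mat_apply (\<lambda>i j. T j i) u) \<and> l2norm_sq (mat_apply (\<lambda>i j. T j i) u) \<le> (c * l2norm u)\<^sup>2"
proof -
  note partial_le = transpose_apply_partial_norm_le[OF T u c0 c]
  have "summable (\<lambda>l. (cmod (mat_apply (\<lambda>i j. T j i) u l))\<^sup>2)"
    by (rule summableI_nonneg_bounded[OF _ partial_le]) simp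
  with suminf_le_const[OF this partial_le] show ?thesis by (simp add: l2_def l2norm_sq_def)
qed

lemma transpose_apply_l2: "bounded_op T \<Longrightarrow> l2 u \<Longrightarrow> l2 (mat_apply (\<lambda>i j. T j i) u)"
  by (metis bounded_op_bound transpose_apply_bound)

lemma pairing_apply_trunc_seq_tendsto:
  assumes T: "bounded_op T" and u: "l2 u" and x: "l2 x"
  shows "(\<lambda>n. \<Sum>j. u j * mat_apply T (trunc_seq n x) j) \<longlonglongrightarrow> (\<Sum>j. u j * mat_apply T x j)"
proof -
  obtain c where c: "\<And>x. l2 x \<Longrightarrow> l2norm (mat_apply T x) \<le> c * l2norm x"
    using bounded_op_bound[OF T] by metis
  have dist_le: "norm ((\<Sum>j. u j * mat_apply T (trunc_seq n x) j) - (\<Sum>j. u j * mat_apply T x j))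
      \<le> l2norm u * (c * sqrt (l2norm_sq (tail_seq n x)))" for n
  proof -
    have tail: "tail_seq n x = (\<lambda>j. x j - trunc_seq n x j)"
      by (auto simp: tail_seq_def trunc_seq_def)
    have "(\<Sum>j. u j * mat_apply T x j) - (\<Sum>j. u j * mat_apply T (trunc_seq n x) j)
        = (\<Sum>j. u j * mat_apply T (tail_seq n x) j)"
      by (simp add: suminf_diff summable_mult_l2 u bounded_op_l2 T x l2_trunc_seq tail
          mat_apply_diff[OF T x l2_trunc_seq] right_diff_distrib)
    hence "norm ((\<Sum>j. u j * mat_apply T (trunc_seq n x) j) - (\<Sum>j. u j * mat_apply T x j))
        \<le> l2norm u * l2norm (mat_apply T (tail_seq n x))"
      using l2_Cauchy_Schwarz[OF u bounded_op_l2[OF T l2_tail_seq[OF x]]] by (simp add: norm_minus_commute)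
    also have "\<dots> \<le> l2norm u * (c * l2norm (tail_seq n x))"
      by (rule mult_left_mono[OF c[OF l2_tail_seq[OF x]] l2norm_nonneg[OF u]])
    finally show ?thesis by (simp add: l2norm_eq_sqrt)
  qed
  have "(\<lambda>n. l2norm u * (c * sqrt (l2norm_sq (tail_seq n x)))) \<longlonglongrightarrow> l2norm u * (c * sqrt 0)"
    by (intro tendsto_mult tendsto_const tendsto_real_sqrt l2norm_sq_tail_seq_tendsto_0[OF x])
  hence "(\<lambda>n. (\<Sum>j. u j * mat_apply T (trunc_seq n x) j) - (\<Sum>j. u j * mat_apply T x j)) \<longlonglongrightarrow> 0"
    by (intro Lim_null_comparison[OF always_eventually[OF allI[OF dist_le]]]) simp
  thus ?thesis by (simp add: LIM_zero_iff)
qed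

lemma transpose_apply_pairing:
  assumes T: "bounded_op T" and u: "l2 u" and x: "l2 x"
  shows "(\<Sum>l. mat_apply (\<lambda>i j. T j i) u l * x l) = (\<Sum>j. u j * mat_apply T x j)"
proof -
  have "(\<lambda>n. \<Sum>l<n. mat_apply (\<lambda>i j. T j i) u l * x l) \<longlonglongrightarrow> (\<Sum>j. u j * mat_apply T x j)"
    unfolding transpose_apply_partial_sum[OF T u] by (rule pairing_apply_trunc_seq_tendsto[OF T u x])
  with summable_LIMSEQ[OF summable_mult_l2[OF transpose_apply_l2[OF T u] x]] show ?thesis
    by (rule LIMSEQ_unique)
qed

lemma mat_apply_imat_mult:
  assumes X: "\<And>i. l2 (\<lambda>j. X i j)" and T: "bounded_op T" and y: "l2 y"
  shows "mat_apply (imat_mult X T) y = mat_apply X (mat_apply T y)"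
proof
  fix i
  have "(\<Sum>l. mat_apply (\<lambda>i j. T j i) (\<lambda>j. X i j) l * y l) = (\<Sum>j. X i j * mat_apply T y j)"
    by (rule transpose_apply_pairing[OF T X y])
  thus "mat_apply (imat_mult X T) y i = mat_apply X (mat_apply T y) i"
    by (simp add: imat_mult_def mat_apply_def mult.commute)
qed

lemma op_norm_le_sqrt:
  assumes q: "0 \<le> q" and le: "\<And>y. l2 y \<Longrightarrow> l2norm_sq (mat_apply T y) \<le> q * l2norm_sq y"
  shows "op_norm T \<le> sqrt q"
  unfolding op_norm_def
proof (rule cSup_least)
  show "{l2norm (mat_apply T x) | x. l2 x \<and> l2norm x \<le> 1} \<noteq> {}"
    using l2_zero by (fastforce simp: l2norm_def)
next
  fix z assume "z \<in> {l2norm (mat_apply T x) | x. l2 x \<and> l2norm x \<le> 1}"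
  then obtain y where y: "l2 y" "l2norm y \<le> 1" and z: "z = l2norm (mat_apply T y)" by blast
  have "z \<le> sqrt (q * l2norm_sq y)" unfolding z l2norm_eq_sqrt by (rule real_sqrt_le_mono[OF le[OF y(1)]])
  also have "\<dots> = sqrt q * l2norm y" by (simp add: l2norm_eq_sqrt real_sqrt_mult)
  also have "\<dots> \<le> sqrt q" using mult_left_mono[OF y(2), of "sqrt q"] q by simp
  finally show "z \<le> sqrt q" .
qed

lemma is_bounded_inverse_binv: "has_bounded_inverse X \<Longrightarrow> is_bounded_inverse X (binv X)"
  unfolding has_bounded_inverse_def binv_def using someI_ex[of "is_bounded_inverse X"] by blast

lemma is_bounded_inverse_scale:
  fixes G Z :: imat
  assumes GZ: "is_bounded_inverse G Z" and s: "s \<noteq> 0"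
  shows "is_bounded_inverse (\<lambda>i j. s * G i j) (\<lambda>i j. inverse s * Z i j)"
proof -
  have G: "bounded_op G" and Z: "bounded_op Z"
    and inv: "\<And>x. l2 x \<Longrightarrow> mat_apply G (mat_apply Z x) = x \<and> mat_apply Z (mat_apply G x) = x"
    using GZ unfolding is_bounded_inverse_def by blast+
  have scaled: "mat_apply (\<lambda>i j. s * S i j) (mat_apply (\<lambda>i j. inverse s * R i j) x) = x"
    if S: "bounded_op S" and R: "bounded_op R" and x: "l2 x" and SR: "mat_apply S (mat_apply R x) = x"
    for S R x
    using s by (simp add: mat_apply_scale_op[OF R x] mat_apply_scale_op[OF S l2_scale[OF bounded_op_l2[OF R x]]]
                 mat_apply_scale[OF S bounded_op_l2[OF R x]] SR mult.assoc[symmetric])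
  have scaled': "mat_apply (\<lambda>i j. inverse s * S i j) (mat_apply (\<lambda>i j. s * R i j) x) = x"
    if S: "bounded_op S" and R: "bounded_op R" and x: "l2 x" and SR: "mat_apply S (mat_apply R x) = x"
    for S R x
    using s by (simp add: mat_apply_scale_op[OF R x] mat_apply_scale_op[OF S l2_scale[OF bounded_op_l2[OF R x]]]
                 mat_apply_scale[OF S bounded_op_l2[OF R x]] SR mult.assoc[symmetric])
  show ?thesis unfolding is_bounded_inverse_def
    using scaled[OF G Z] scaled'[OF Z G] inv bounded_op_scale[OF G] bounded_op_scale[OF Z] by blast
qed

section \<open>Hilbert--Schmidt matrices\<close>

definition hs_norm_sq :: "imat \<Rightarrow> real" where
  "hs_norm_sq X = (\<Sum>i. l2norm_sq (\<lambda>j. X i j))"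

lemma hilbert_schmidt_iff_rows:
  "hilbert_schmidt X \<longleftrightarrow> (\<forall>i. l2 (\<lambda>j. X i j)) \<and> summable (\<lambda>i. l2norm_sq (\<lambda>j. X i j))"
proof
  assume "hilbert_schmidt X"
  hence hs: "(\<lambda>(i, j). (cmod (X i j))\<^sup>2) summable_on Sigma UNIV (\<lambda>_. UNIV)"
    unfolding hilbert_schmidt_def by simp
  have row: "l2 (\<lambda>j. X i j)" for i
    using summable_on_SigmaD1[OF hs, of i] summable_on_UNIV_nonneg_real_iff[of "\<lambda>j. (cmod (X i j))\<^sup>2"]
    by (simp add: l2_def)
  have "infsum (\<lambda>j. (cmod (X i j))\<^sup>2) UNIV = l2norm_sq (\<lambda>j. X i j)" for i
    by (rule infsumI, rule sums_nonneg_imp_has_sum[OF l2_sums[OF row]]) simp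
  moreover have "(\<lambda>i. infsum (\<lambda>j. (\<lambda>(i, j). (cmod (X i j))\<^sup>2) (i, j)) UNIV) summable_on UNIV"
    by (rule summable_on_SigmaD[OF hs]) (use summable_on_SigmaD1[OF hs] in simp)
  ultimately have "(\<lambda>i. l2norm_sq (\<lambda>j. X i j)) summable_on UNIV" by simp
  hence "summable (\<lambda>i. l2norm_sq (\<lambda>j. X i j))"
    using summable_on_UNIV_nonneg_real_iff[of "\<lambda>i. l2norm_sq (\<lambda>j. X i j)"] l2norm_sq_nonneg[OF row]
    by simp
  with row show "(\<forall>i. l2 (\<lambda>j. X i j)) \<and> summable (\<lambda>i. l2norm_sq (\<lambda>j. X i j))" by blast
next
  assume rows: "(\<forall>i. l2 (\<lambda>j. X i j)) \<and> summable (\<lambda>i. l2norm_sq (\<lambda>j. X i j))"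
  have "(\<lambda>(i, j). (cmod (X i j))\<^sup>2) summable_on Sigma UNIV (\<lambda>_. UNIV)"
  proof (rule summable_on_SigmaI[where g="\<lambda>i. l2norm_sq (\<lambda>j. X i j)"])
    show "((\<lambda>j. (\<lambda>(i, j). (cmod (X i j))\<^sup>2) (i, j)) has_sum l2norm_sq (\<lambda>j. X i j)) UNIV" for i
      using sums_nonneg_imp_has_sum[OF l2_sums[of "\<lambda>j. X i j"]] rows by simp
    show "(\<lambda>i. l2norm_sq (\<lambda>j. X i j)) summable_on UNIV"
      by (rule summable_nonneg_imp_summable_on) (use rows l2norm_sq_nonneg in simp_all)
  qed auto
  thus "hilbert_schmidt X" unfolding hilbert_schmidt_def by simp
qed

lemma hilbert_schmidt_row: "hilbert_schmidt X \<Longrightarrow> l2 (\<lambda>j. X i j)"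
  using hilbert_schmidt_iff_rows by blast

lemma hilbert_schmidt_rows_summable: "hilbert_schmidt X \<Longrightarrow> summable (\<lambda>i. l2norm_sq (\<lambda>j. X i j))"
  using hilbert_schmidt_iff_rows by blast

lemma hilbert_schmidt_by_rows:
  assumes row: "\<And>i. l2 (\<lambda>j. X i j)" and le: "\<And>i. l2norm_sq (\<lambda>j. X i j) \<le> g i" and g: "summable g"
  shows "hilbert_schmidt X"
proof -
  have "summable (\<lambda>i. l2norm_sq (\<lambda>j. X i j))"
    by (rule summable_comparison_test'[OF g, where N=0]) (simp add: le l2norm_sq_nonneg[OF row])
  with row show ?thesis by (simp add: hilbert_schmidt_iff_rows)
qed

lemma hs_norm_sq_nonneg: "hilbert_schmidt X \<Longrightarrow> 0 \<le> hs_norm_sq X"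
  unfolding hs_norm_sq_def
  by (rule suminf_nonneg[OF hilbert_schmidt_rows_summable]) (simp_all add: l2norm_sq_nonneg hilbert_schmidt_row)

lemma hilbert_schmidt_apply:
  assumes X: "hilbert_schmidt X" and x: "l2 x"
  shows "l2 (mat_apply X x) \<and> l2norm_sq (mat_apply X x) \<le> hs_norm_sq X * l2norm_sq x"
proof -
  have entry_le: "(cmod (mat_apply X x i))\<^sup>2 \<le> l2norm_sq (\<lambda>j. X i j) * l2norm_sq x" for i
  proof -
    have "cmod (mat_apply X x i) \<le> l2norm (\<lambda>j. X i j) * l2norm x"
      unfolding mat_apply_def by (rule l2_Cauchy_Schwarz[OF hilbert_schmidt_row[OF X] x])
    hence "(cmod (mat_apply X x i))\<^sup>2 \<le> (l2norm (\<lambda>j. X i j) * l2norm x)\<^sup>2"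
      by (rule power_mono) simp
    thus ?thesis
      using l2norm_sq_nonneg[OF hilbert_schmidt_row[OF X]] l2norm_sq_nonneg[OF x]
      by (simp add: l2norm_eq_sqrt power_mult_distrib)
  qed
  have g: "summable (\<lambda>i. l2norm_sq (\<lambda>j. X i j) * l2norm_sq x)"
    by (rule summable_mult2[OF hilbert_schmidt_rows_summable[OF X]])
  have s: "summable (\<lambda>i. (cmod (mat_apply X x i))\<^sup>2)"
    by (rule summable_comparison_test'[OF g, where N=0]) (simp add: entry_le)
  have "l2norm_sq (mat_apply X x) \<le> (\<Sum>i. l2norm_sq (\<lambda>j. X i j) * l2norm_sq x)"
    unfolding l2norm_sq_def[of "mat_apply X x"] by (rule suminf_le[OF entry_le s g])
  also have "\<dots> = hs_norm_sq X * l2norm_sq x"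
    unfolding hs_norm_sq_def by (rule suminf_mult2[OF hilbert_schmidt_rows_summable[OF X], symmetric])
  finally show ?thesis using s by (simp add: l2_def)
qed

lemma hilbert_schmidt_bounded_op:
  assumes X: "hilbert_schmidt X"
  shows "bounded_op X"
  unfolding bounded_op_def
proof (intro exI allI impI conjI)
  fix x :: "nat \<Rightarrow> complex" assume x: "l2 x"
  show "summable (\<lambda>j. X i j * x j)" for i by (rule summable_mult_l2[OF hilbert_schmidt_row[OF X] x])
  show "l2 (mat_apply X x)" using hilbert_schmidt_apply[OF X x] by blast
  have "sqrt (l2norm_sq (mat_apply X x)) \<le> sqrt (hs_norm_sq X * l2norm_sq x)"
    using hilbert_schmidt_apply[OF X x] by simp
  thus "l2norm (mat_apply X x) \<le> sqrt (hs_norm_sq X) * l2norm x"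
    by (simp add: l2norm_eq_sqrt real_sqrt_mult)
qed

lemma hilbert_schmidt_add:
  assumes X: "hilbert_schmidt X" and Y: "hilbert_schmidt Y"
  shows "hilbert_schmidt (\<lambda>i j. X i j + Y i j)"
proof (rule hilbert_schmidt_by_rows)
  note rX = hilbert_schmidt_row[OF X] and rY = hilbert_schmidt_row[OF Y]
  show "l2 (\<lambda>j. X i j + Y i j)" for i by (rule l2_add[OF rX rY])
  show "l2norm_sq (\<lambda>j. X i j + Y i j) \<le> 2 * l2norm_sq (\<lambda>j. X i j) + 2 * l2norm_sq (\<lambda>j. Y i j)" for i
  proof -
    have "(\<lambda>j. 2 * (cmod (X i j))\<^sup>2 + 2 * (cmod (Y i j))\<^sup>2)
            sums (2 * l2norm_sq (\<lambda>j. X i j) + 2 * l2norm_sq (\<lambda>j. Y i j))"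
      by (intro sums_add sums_mult l2_sums rX rY)
    with l2_sums[OF l2_add[OF rX rY]] show ?thesis by (rule sums_le[OF cmod_add_squared_le])
  qed
  show "summable (\<lambda>i. 2 * l2norm_sq (\<lambda>j. X i j) + 2 * l2norm_sq (\<lambda>j. Y i j))"
    by (intro summable_add summable_mult hilbert_schmidt_rows_summable X Y)
qed

lemma hilbert_schmidt_scale:
  assumes X: "hilbert_schmidt X"
  shows "hilbert_schmidt (\<lambda>i j. c * X i j)"
  by (rule hilbert_schmidt_by_rows[where g="\<lambda>i. (cmod c)\<^sup>2 * l2norm_sq (\<lambda>j. X i j)"])
     (simp_all add: l2_scale hilbert_schmidt_row[OF X] l2norm_sq_scale
       summable_mult hilbert_schmidt_rows_summable[OF X])

lemma hilbert_schmidt_sum: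
  "finite I \<Longrightarrow> (\<And>a. a \<in> I \<Longrightarrow> hilbert_schmidt (X a)) \<Longrightarrow> hilbert_schmidt (\<lambda>i j. \<Sum>a\<in>I. X a i j)"
proof (induction I rule: finite_induct)
  case empty
  show ?case by (rule hilbert_schmidt_by_rows[where g="\<lambda>_. 0"]) (simp_all add: l2_zero l2norm_sq_def)
next
  case (insert a I)
  thus ?case using hilbert_schmidt_add[of "X a" "\<lambda>i j. \<Sum>a\<in>I. X a i j"] by simp
qed

lemma hilbert_schmidt_rank_one:
  assumes p: "l2 p" and q: "l2 q"
  shows "hilbert_schmidt (\<lambda>i j. p i * q j)"
  by (rule hilbert_schmidt_by_rows[where g="\<lambda>i. (cmod (p i))\<^sup>2 * l2norm_sq q"])
     (use p in \<open>simp_all add: l2_scale[OF q] l2norm_sq_scale[OF q] l2_def summable_mult2\<close>)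

lemma hilbert_schmidt_mult_bounded_op:
  assumes X: "hilbert_schmidt X" and T: "bounded_op T"
  shows "hilbert_schmidt (imat_mult X T)"
proof -
  obtain c where c0: "c \<ge> 0" and c: "\<And>x. l2 x \<Longrightarrow> l2norm (mat_apply T x) \<le> c * l2norm x"
    using bounded_op_bound[OF T] by metis
  have row: "(\<lambda>j. imat_mult X T i j) = mat_apply (\<lambda>i j. T j i) (\<lambda>j. X i j)" for i
    by (simp add: imat_mult_def mat_apply_def mult.commute)
  note bound = transpose_apply_bound[OF T hilbert_schmidt_row[OF X] c0 c]
  show ?thesis
  proof (rule hilbert_schmidt_by_rows[where g="\<lambda>i. c\<^sup>2 * l2norm_sq (\<lambda>j. X i j)"])
    show "l2 (\<lambda>j. imat_mult X T i j)" for i using bound by (simp add: row)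
    show "l2norm_sq (\<lambda>j. imat_mult X T i j) \<le> c\<^sup>2 * l2norm_sq (\<lambda>j. X i j)" for i
      using bound[of i] l2norm_sq_nonneg[OF hilbert_schmidt_row[OF X]]
      by (simp add: row l2norm_eq_sqrt power_mult_distrib)
    show "summable (\<lambda>i. c\<^sup>2 * l2norm_sq (\<lambda>j. X i j))"
      by (rule summable_mult[OF hilbert_schmidt_rows_summable[OF X]])
  qed
qed

section \<open>Gram matrices\<close>

definition gram :: "imat \<Rightarrow> imat" where
  "gram T m l = (\<Sum>j. cnj (T j m) * T j l)"

lemma suminf_cnj: "summable f \<Longrightarrow> cnj (suminf f) = (\<Sum>j. cnj (f j))"
  by (metis sums_cnj sums_unique summable_sums)

lemma gram_transpose_col: "gram T b = mat_apply (\<lambda>i j. T j i) (\<lambda>j. cnj (T j b))"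
  by (simp add: gram_def mat_apply_def mult.commute fun_eq_iff)

lemma l2_gram_row: "bounded_op T \<Longrightarrow> l2 (gram T b)"
  unfolding gram_transpose_col by (intro transpose_apply_l2 l2_cnj bounded_op_col)

lemma mat_apply_gram:
  assumes T: "bounded_op T" and x: "l2 x"
  shows "mat_apply (gram T) x b = l2_inner (\<lambda>j. T j b) (mat_apply T x)"
  using transpose_apply_pairing[OF T l2_cnj[OF bounded_op_col[OF T]] x]
  by (simp add: mat_apply_def[of "gram T"] gram_transpose_col l2_inner_def)

lemma cnj_mat_apply_gram:
  assumes T: "bounded_op T" and x: "l2 x"
  shows "cnj (mat_apply (gram T) x m) = mat_apply (\<lambda>i j. T j i) (\<lambda>j. cnj (mat_apply T x j)) m"
proof -
  have "summable (\<lambda>j. cnj (T j m) * mat_apply T x j)"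
    by (rule summable_mult_l2[OF l2_cnj[OF bounded_op_col[OF T]] bounded_op_l2[OF T x]])
  hence "cnj (l2_inner (\<lambda>j. T j m) (mat_apply T x)) = (\<Sum>j. T j m * cnj (mat_apply T x j))"
    by (simp add: l2_inner_def suminf_cnj)
  thus ?thesis by (simp add: mat_apply_gram[OF T x] mat_apply_def[of "\<lambda>i j. T j i"])
qed

lemma l2_mat_apply_gram:
  assumes T: "bounded_op T" and x: "l2 x"
  shows "l2 (mat_apply (gram T) x)"
proof -
  have "l2 (\<lambda>m. cnj (mat_apply (\<lambda>i j. T j i) (\<lambda>j. cnj (mat_apply T x j)) m))"
    by (intro l2_cnj transpose_apply_l2 T bounded_op_l2 x)
  thus ?thesis by (simp flip: cnj_mat_apply_gram[OF T x])
qed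

lemma l2norm_sq_apply_eq_gram:
  assumes T: "bounded_op T" and x: "l2 x"
  shows "complex_of_real (l2norm_sq (mat_apply T x)) = l2_inner (mat_apply (gram T) x) x"
proof -
  have Tx: "l2 (mat_apply T x)" by (rule bounded_op_l2[OF T x])
  have "complex_of_real (l2norm_sq (mat_apply T x)) = (\<Sum>j. cnj (mat_apply T x j) * mat_apply T x j)"
    by (simp add: l2norm_sq_eq_inner[OF Tx] l2_inner_def)
  also have "\<dots> = (\<Sum>m. mat_apply (\<lambda>i j. T j i) (\<lambda>j. cnj (mat_apply T x j)) m * x m)"
    by (rule transpose_apply_pairing[OF T l2_cnj[OF Tx] x, symmetric])
  also have "\<dots> = l2_inner (mat_apply (gram T) x) x"
    by (simp add: l2_inner_def cnj_mat_apply_gram[OF T x])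
  finally show ?thesis .
qed

lemma gram_diff_conj_pair:
  fixes B C :: imat
  defines "X \<equiv> \<lambda>i j. C i j + \<i> * B i j" and "Y \<equiv> \<lambda>i j. C i j - \<i> * B i j"
  assumes X: "bounded_op X" and Y: "bounded_op Y"
  shows "gram Y l m - gram X l m = - 2 * \<i> * (\<Sum>j. cnj (C j l) * B j m - cnj (B j l) * C j m)"
proof -
  have pw: "cnj (Y j l) * Y j m - cnj (X j l) * X j m = - 2 * \<i> * (cnj (C j l) * B j m - cnj (B j l) * C j m)"
    for j by (simp add: X_def Y_def algebra_simps)
  have "(\<lambda>j. cnj (Y j l) * Y j m - cnj (X j l) * X j m) sums (gram Y l m - gram X l m)"
    unfolding gram_def
    by (intro sums_diff summable_sums summable_mult_l2 l2_cnj bounded_op_col X Y)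
  hence "(\<lambda>j. - 2 * \<i> * (cnj (C j l) * B j m - cnj (B j l) * C j m)) sums (gram Y l m - gram X l m)"
    by (simp only: pw)
  from sums_divide[OF this, of "- 2 * \<i>"]
  have "(\<lambda>j. cnj (C j l) * B j m - cnj (B j l) * C j m) sums ((gram Y l m - gram X l m) / (- 2 * \<i>))"
    by simp
  hence "\<i> * ((\<Sum>j. cnj (C j l) * B j m - cnj (B j l) * C j m) * 2) = \<i> * \<i> * (gram Y l m - gram X l m)"
    by (simp add: sums_iff)
  thus ?thesis by (simp add: algebra_simps)
qed

section \<open>The residual of the projection onto finitely many vectors\<close>

text \<open>If \<open>W\<close> inverts the Gram matrix \<open>N\<^sub>a\<^sub>b = \<langle>f\<^sub>a, f\<^sub>b\<rangle>\<close> of \<open>f\<^sub>0, \<dots>, f\<^sub>k\<^sub>-\<^sub>1\<close>, then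
  \<open>z \<mapsto> \<Sum>\<^sub>a\<^sub>,\<^sub>b f\<^sub>a W\<^sub>a\<^sub>b \<langle>f\<^sub>b, z\<rangle>\<close> is the orthogonal projection onto their span.\<close>

definition proj_residual :: "nat \<Rightarrow> (nat \<Rightarrow> nat \<Rightarrow> complex) \<Rightarrow> imat \<Rightarrow> (nat \<Rightarrow> complex) \<Rightarrow> nat \<Rightarrow> complex" where
  "proj_residual k f W z = (\<lambda>i. z i - (\<Sum>a<k. f a i * (\<Sum>b<k. W a b * l2_inner (f b) z)))"

lemma l2_proj_residual:
  assumes f: "\<And>a. a < k \<Longrightarrow> l2 (f a)" and z: "l2 z"
  shows "l2 (proj_residual k f W z)"
  unfolding proj_residual_def by (intro l2_diff z l2_sum l2_scale_right f) simp_all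

lemma proj_residual_span_eq_0:
  assumes f: "\<And>a. a < k \<Longrightarrow> l2 (f a)"
    and W: "is_fin_inverse k (\<lambda>a b. l2_inner (f a) (f b)) W"
  shows "proj_residual k f W (\<lambda>i. \<Sum>c<k. f c i * t c) = (\<lambda>i. 0)"
proof -
  have coeff: "(\<Sum>b<k. W a b * l2_inner (f b) (\<lambda>i. \<Sum>c<k. f c i * t c)) = t a" if a: "a < k" for a
  proof -
    have "(\<Sum>b<k. W a b * l2_inner (f b) (\<lambda>i. \<Sum>c<k. f c i * t c))
        = (\<Sum>b<k. W a b * (\<Sum>c<k. t c * l2_inner (f b) (f c)))"
      by (intro sum.cong refl arg_cong2[where f="(*)"] l2_inner_sum_right f) simp_all
    also have "\<dots> = (\<Sum>b<k. \<Sum>c<k. t c * (W a b * l2_inner (f b) (f c)))"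
      by (simp add: sum_distrib_left mult_ac)
    also have "\<dots> = (\<Sum>c<k. t c * (\<Sum>b<k. W a b * l2_inner (f b) (f c)))"
      by (subst sum.swap) (simp add: sum_distrib_left)
    also have "\<dots> = (\<Sum>c<k. if c = a then t a else 0)"
      using W a unfolding is_fin_inverse_def by (intro sum.cong) auto
    also have "\<dots> = t a" using a by simp
    finally show ?thesis .
  qed
  show ?thesis by (simp add: proj_residual_def coeff)
qed

lemma proj_residual_diff:
  assumes f: "\<And>a. a < k \<Longrightarrow> l2 (f a)" and z: "l2 z" and u: "l2 u"
  shows "proj_residual k f W (\<lambda>i. z i - u i) = (\<lambda>i. proj_residual k f W z i - proj_residual k f W u i)"
  unfolding proj_residual_def
  by (simp add: l2_inner_diff_right[OF f z u] algebra_simps sum_subtractf)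

lemma proj_residual_orthogonal:
  assumes f: "\<And>a. a < k \<Longrightarrow> l2 (f a)" and z: "l2 z"
    and W: "is_fin_inverse k (\<lambda>a b. l2_inner (f a) (f b)) W" and c: "c < k"
  shows "l2_inner (f c) (proj_residual k f W z) = 0"
proof -
  define d where "d a = (\<Sum>b<k. W a b * l2_inner (f b) z)" for a
  have "l2_inner (f c) (\<lambda>i. \<Sum>a<k. f a i * d a) = (\<Sum>a<k. d a * l2_inner (f c) (f a))"
    by (rule l2_inner_sum_right[OF f[OF c] f])
  also have "\<dots> = (\<Sum>a<k. \<Sum>b<k. l2_inner (f c) (f a) * W a b * l2_inner (f b) z)"
    by (simp add: d_def sum_distrib_left sum_distrib_right mult_ac)
  also have "\<dots> = (\<Sum>b<k. (\<Sum>a<k. l2_inner (f c) (f a) * W a b) * l2_inner (f b) z)"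
    by (subst sum.swap) (simp add: sum_distrib_right)
  also have "\<dots> = (\<Sum>b<k. if b = c then l2_inner (f c) z else 0)"
    using W c unfolding is_fin_inverse_def by (intro sum.cong) auto
  also have "\<dots> = l2_inner (f c) z" using c by simp
  finally have "l2_inner (f c) (\<lambda>i. \<Sum>a<k. f a i * d a) = l2_inner (f c) z" .
  moreover have "l2 (\<lambda>i. \<Sum>a<k. f a i * d a)" by (intro l2_sum l2_scale_right f) simp_all
  ultimately show ?thesis
    unfolding proj_residual_def d_def[symmetric] by (simp add: l2_inner_diff_right[OF f[OF c] z])
qed

lemma l2norm_sq_proj_residual_le:
  assumes f: "\<And>a. a < k \<Longrightarrow> l2 (f a)" and z: "l2 z"
    and W: "is_fin_inverse k (\<lambda>a b. l2_inner (f a) (f b)) W"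
  shows "l2norm_sq (proj_residual k f W z) \<le> l2norm_sq z"
proof -
  define R where "R = proj_residual k f W z"
  define p where "p i = (\<Sum>a<k. f a i * (\<Sum>b<k. W a b * l2_inner (f b) z))" for i
  have R: "l2 R" unfolding R_def by (rule l2_proj_residual[OF f z])
  have p: "l2 p" unfolding p_def by (intro l2_sum l2_scale_right f) simp_all
  have "l2_inner p R = 0"
    unfolding p_def R_def
    by (simp add: l2_inner_sum_left[OF l2_proj_residual[OF f z] f] proj_residual_orthogonal[OF f z W])
  hence "l2norm_sq (\<lambda>i. p i + R i) = l2norm_sq p + l2norm_sq R"
    by (intro l2norm_sq_add_orthogonal p R) simp
  moreover have "(\<lambda>i. p i + R i) = z" by (simp add: R_def p_def proj_residual_def)
  ultimately show ?thesis using l2norm_sq_nonneg[OF p] by (simp add: R_def)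
qed

section \<open>Inverting a finite matrix\<close>

lemma is_fin_inverse_cong:
  "(\<And>a b. a < k \<Longrightarrow> b < k \<Longrightarrow> N a b = N' a b) \<Longrightarrow> is_fin_inverse k N W \<longleftrightarrow> is_fin_inverse k N' W"
  unfolding is_fin_inverse_def by (auto intro!: sum.cong)

text \<open>\<open>fin_inv\<close> works with \<open>nat\<close> indices below \<open>k\<close>; an enumeration \<open>e\<close> of a finite type of
  cardinality \<open>k\<close> turns the square matrix into a \<open>complex^'k^'k\<close>, where injective implies invertible.\<close>

context
  fixes e :: "'k::finite \<Rightarrow> nat"
  assumes e: "bij_betw e UNIV {..<CARD('k)}"
begin

lemma enum_inv_into: "a < CARD('k) \<Longrightarrow> e (inv_into UNIV e a) = a"
  using e by (simp add: bij_betw_inv_into_right)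

lemma inv_into_enum: "inv_into UNIV e (e p) = p"
  using e by (simp add: bij_betw_def)

lemma enum_less_card: "e p < CARD('k)"
  using bij_betw_apply[OF e] by simp

lemma sum_lessThan_card_enum: "(\<Sum>c<CARD('k). g c) = (\<Sum>p\<in>UNIV. g (e p))"
  using sum.reindex_bij_betw[OF e, of g] by simp

lemma invertible_enum_mat:
  fixes N :: imat
  assumes inj: "\<And>v. \<forall>a<CARD('k). (\<Sum>b<CARD('k). N a b * v b) = 0 \<Longrightarrow> \<forall>a<CARD('k). v a = 0"
  shows "invertible (\<chi> p q. N (e p) (e q) :: complex^'k^'k)"
proof -
  define A :: "complex^'k^'k" where "A = (\<chi> p q. N (e p) (e q))"
  have "x = 0" if Ax: "A *v x = 0" for x
  proof -
    define v where "v b = (if b < CARD('k) then x $ inv_into UNIV e b else 0)" for b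
    have Nv: "(\<Sum>b<CARD('k). N a b * v b) = (A *v x) $ inv_into UNIV e a" if a: "a < CARD('k)" for a
      by (simp add: sum_lessThan_card_enum matrix_vector_mult_def A_def v_def enum_inv_into[OF a]
          inv_into_enum enum_less_card)
    have "\<forall>a<CARD('k). v a = 0" by (rule inj) (simp add: Nv Ax)
    hence "x $ q = 0" for q using enum_less_card[of q] by (metis v_def inv_into_enum)
    thus "x = 0" by (simp add: vec_eq_iff)
  qed
  then obtain Bi where "Bi ** A = mat 1" using matrix_left_invertible_ker by blast
  thus ?thesis unfolding A_def[symmetric] invertible_def using matrix_left_right_inverse by blast
qed

lemma is_fin_inverse_enum_mat:
  fixes N :: imat and Bi :: "complex^'k^'k"
  defines "A \<equiv> \<chi> p q. N (e p) (e q)"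
  assumes AB: "A ** Bi = mat 1" and BA: "Bi ** A = mat 1"
  shows "is_fin_inverse CARD('k) N (\<lambda>a b. Bi $ inv_into UNIV e a $ inv_into UNIV e b)"
  unfolding is_fin_inverse_def
proof (intro conjI allI impI)
  fix a b assume a: "a < CARD('k)" and b: "b < CARD('k)"
  have ie_eq_iff: "inv_into UNIV e a = inv_into UNIV e b \<longleftrightarrow> a = b"
    using enum_inv_into[OF a] enum_inv_into[OF b] by metis
  have "(\<Sum>c<CARD('k). N a c * Bi $ inv_into UNIV e c $ inv_into UNIV e b)
      = (A ** Bi) $ inv_into UNIV e a $ inv_into UNIV e b"
    by (simp add: sum_lessThan_card_enum matrix_matrix_mult_def A_def enum_inv_into[OF a] inv_into_enum)
  thus "(\<Sum>c<CARD('k). N a c * Bi $ inv_into UNIV e c $ inv_into UNIV e b) = (if a = b then 1 else 0)"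
    using AB ie_eq_iff by (simp add: mat_def)
  have "(\<Sum>c<CARD('k). Bi $ inv_into UNIV e a $ inv_into UNIV e c * N c b)
      = (Bi ** A) $ inv_into UNIV e a $ inv_into UNIV e b"
    by (simp add: sum_lessThan_card_enum matrix_matrix_mult_def A_def enum_inv_into[OF b] inv_into_enum)
  thus "(\<Sum>c<CARD('k). Bi $ inv_into UNIV e a $ inv_into UNIV e c * N c b) = (if a = b then 1 else 0)"
    using BA ie_eq_iff by (simp add: mat_def)
qed

end

lemma is_fin_inverse_fin_inv:
  fixes N :: imat
  assumes inj: "\<And>v. \<forall>a<CARD('k::finite). (\<Sum>b<CARD('k). N a b * v b) = 0 \<Longrightarrow> \<forall>a<CARD('k). v a = 0"
  shows "is_fin_inverse CARD('k) N (fin_inv CARD('k) N)"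
proof -
  obtain e :: "'k \<Rightarrow> nat" where e: "bij_betw e UNIV {..<CARD('k)}"
    using ex_bij_betw_finite_nat[OF finite_class.finite_UNIV] by (auto simp: atLeast0LessThan)
  obtain Bi where "(\<chi> p q. N (e p) (e q)) ** Bi = mat 1" "Bi ** (\<chi> p q. N (e p) (e q)) = mat 1"
    using invertible_enum_mat[OF e inj] unfolding invertible_def by blast
  from is_fin_inverse_enum_mat[OF e this] show ?thesis
    unfolding fin_inv_def by (rule someI[where P="is_fin_inverse CARD('k) N"])
qed

section \<open>Complex germs at a point\<close>

text \<open>\<open>X\<close> and \<open>Y\<close> stand for \<open>C + iB\<close> and \<open>C - iB\<close> at a point: \<open>gram_Y_eq\<close> is condition (r4),
  \<open>cnj_X_col\<close> records that the first \<open>k\<close> columns of \<open>B\<close> and \<open>C\<close> are real (r2), and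
  \<open>tangent a\<close> is \<open>\<partial>\<phi>/\<partial>\<tau>\<^sub>a\<close>.\<close>

locale complex_germ =
  fixes k :: nat and X Y :: imat
  assumes hilbert_schmidt_X: "hilbert_schmidt X"
    and has_bounded_inverse_Y: "has_bounded_inverse Y"
    and gram_Y_eq: "\<And>l m. gram Y l m = gram X l m + (if l = m \<and> k \<le> l then 2 else 0)"
    and cnj_X_col: "\<And>i a. a < k \<Longrightarrow> cnj (X i a) = Y i a"
begin

definition tangent :: "nat \<Rightarrow> nat \<Rightarrow> complex" where
  "tangent a i = X i a / of_real (sqrt 2)"

definition tangent_gram :: imat where
  "tangent_gram a b = l2_inner (tangent a) (tangent b)"

definition proj_mat :: "imat \<Rightarrow> imat" where
  "proj_mat W i j = (\<Sum>a<k. \<Sum>b<k. tangent a i * W a b * tangent b j)"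

definition M :: "imat \<Rightarrow> imat" where
  "M W i j = imat_mult X (binv Y) i j - proj_mat W i j"

lemma bounded_op_X: "bounded_op X"
  by (rule hilbert_schmidt_bounded_op[OF hilbert_schmidt_X])

lemma Y_inverse: "is_bounded_inverse Y (binv Y)"
  by (rule is_bounded_inverse_binv[OF has_bounded_inverse_Y])

lemma bounded_op_Y: "bounded_op Y" and bounded_op_binv_Y: "bounded_op (binv Y)"
  using Y_inverse by (simp_all add: is_bounded_inverse_def)

lemma binv_Y_apply_Y: "l2 x \<Longrightarrow> mat_apply (binv Y) (mat_apply Y x) = x"
  and Y_apply_binv_Y: "l2 x \<Longrightarrow> mat_apply Y (mat_apply (binv Y) x) = x"
  using Y_inverse by (simp_all add: is_bounded_inverse_def)

lemma l2_tangent: "l2 (tangent a)"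
  unfolding tangent_def using l2_scale_right[OF bounded_op_col[OF bounded_op_X], of a "inverse (of_real (sqrt 2))"]
  by (simp add: divide_inverse)

lemma cnj_tangent: "a < k \<Longrightarrow> cnj (tangent a i) = inverse (of_real (sqrt 2)) * Y i a"
  by (simp add: tangent_def cnj_X_col divide_inverse mult.commute)

lemma gram_X_eq_tangent_gram: "gram X a b = 2 * tangent_gram a b"
proof -
  have s2: "complex_of_real (sqrt 2) * complex_of_real (sqrt 2) = 2"
    by (simp flip: of_real_mult)
  have "cnj (X i a) * X i b = 2 * (cnj (tangent a i) * tangent b i)" for i
    by (simp add: tangent_def s2 flip: s2)
  thus ?thesis by (simp add: gram_def tangent_gram_def l2_inner_def suminf_mult
                    summable_mult_l2[OF l2_cnj[OF l2_tangent] l2_tangent])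
qed

lemma mat_apply_gram_Y:
  assumes x: "l2 x"
  shows "mat_apply (gram Y) x m = mat_apply (gram X) x m + 2 * tail_seq k x m"
proof -
  have "(\<lambda>l. (if m = l \<and> k \<le> m then 2 else 0) * x l) = (\<lambda>l. if l = m then 2 * tail_seq k x m else 0)"
    by (auto simp: tail_seq_def fun_eq_iff)
  hence "(\<lambda>l. (if m = l \<and> k \<le> m then 2 else 0) * x l) sums (2 * tail_seq k x m)"
    using sums_single[of m "\<lambda>_. 2 * tail_seq k x m"] by simp
  moreover have "(\<lambda>l. gram X m l * x l) sums mat_apply (gram X) x m"
    unfolding mat_apply_def by (intro summable_sums summable_mult_l2 l2_gram_row bounded_op_X x)
  ultimately have "(\<lambda>l. gram Y m l * x l) sums (mat_apply (gram X) x m + 2 * tail_seq k x m)"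
    unfolding gram_Y_eq distrib_right by (rule sums_add[rotated])
  thus ?thesis by (simp add: mat_apply_def sums_iff)
qed

lemma l2norm_sq_Y_apply:
  assumes x: "l2 x"
  shows "l2norm_sq (mat_apply Y x) = l2norm_sq (mat_apply X x) + 2 * l2norm_sq (tail_seq k x)"
proof -
  have gX: "l2 (mat_apply (gram X) x)" by (rule l2_mat_apply_gram[OF bounded_op_X x])
  have t: "l2 (tail_seq k x)" by (rule l2_tail_seq[OF x])
  have gY: "mat_apply (gram Y) x = (\<lambda>m. mat_apply (gram X) x m + 2 * tail_seq k x m)"
    by (rule ext, rule mat_apply_gram_Y[OF x])
  have "l2_inner (tail_seq k x) x = l2_inner (tail_seq k x) (tail_seq k x)"
    unfolding l2_inner_def tail_seq_def by (rule suminf_cong) simp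
  hence "complex_of_real (l2norm_sq (mat_apply Y x))
      = complex_of_real (l2norm_sq (mat_apply X x) + 2 * l2norm_sq (tail_seq k x))"
    by (simp add: l2norm_sq_apply_eq_gram[OF bounded_op_Y x] l2norm_sq_apply_eq_gram[OF bounded_op_X x]
        gY l2_inner_add_left[OF gX l2_scale[OF t] x] l2_inner_scale_left[OF t x]
        l2norm_sq_eq_inner[OF t])
  thus ?thesis by (simp only: of_real_eq_iff)
qed

lemma tangent_gram_injective:
  assumes "\<forall>a<k. (\<Sum>b<k. tangent_gram a b * v b) = 0"
  shows "\<forall>a<k. v a = 0"
proof -
  define u where "u = trunc_seq k v"
  have u: "l2 u" unfolding u_def by (rule l2_trunc_seq)
  have "mat_apply (gram X) u m = 2 * (\<Sum>b<k. tangent_gram m b * v b)" for m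
    by (simp add: u_def mat_apply_trunc_seq gram_X_eq_tangent_gram sum_distrib_left mult.assoc)
  hence "mat_apply (gram X) u m = 0 \<or> u m = 0" for m
    using assms by (cases "m < k") (simp_all add: u_def trunc_seq_def)
  hence terms: "cnj (mat_apply (gram X) u m) * u m = 0" for m by auto
  have "l2norm_sq (mat_apply X u) = 0"
    using l2norm_sq_apply_eq_gram[OF bounded_op_X u] by (simp add: l2_inner_def terms)
  moreover have "tail_seq k u = (\<lambda>j. 0)" by (simp add: u_def tail_seq_def trunc_seq_def fun_eq_iff)
  ultimately have "l2norm_sq (mat_apply Y u) = 0"
    by (simp add: l2norm_sq_Y_apply[OF u]) (simp add: l2norm_sq_def)
  hence "mat_apply Y u = (\<lambda>j. 0)"
    using l2norm_sq_eq_0_iff[OF bounded_op_l2[OF bounded_op_Y u]] by auto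
  hence "u = (\<lambda>j. 0)" using binv_Y_apply_Y[OF u] by (simp add: mat_apply_zero)
  thus ?thesis by (metis u_def trunc_seq_def)
qed

lemma is_fin_inverse_tangent_gram:
  fixes N :: imat
  assumes k: "k = CARD('n::finite)" and N: "\<And>a b. a < k \<Longrightarrow> b < k \<Longrightarrow> N a b = tangent_gram a b"
  shows "is_fin_inverse k tangent_gram (fin_inv k N)"
proof -
  have "is_fin_inverse CARD('n) N (fin_inv CARD('n) N)"
  proof (rule is_fin_inverse_fin_inv)
    fix v assume "\<forall>a<CARD('n). (\<Sum>b<CARD('n). N a b * v b) = 0"
    hence "\<forall>a<k. (\<Sum>b<k. tangent_gram a b * v b) = 0" by (simp add: k N)
    thus "\<forall>a<CARD('n). v a = 0" unfolding k by (rule tangent_gram_injective[unfolded k])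
  qed
  thus ?thesis unfolding k[symmetric] by (simp add: is_fin_inverse_cong[OF N])
qed

lemma tangent_pairing:
  assumes x: "l2 x" and b: "b < k"
  shows "(\<Sum>j. tangent b j * mat_apply Y x j) = l2_inner (tangent b) (mat_apply X x)"
proof -
  define c where "c = inverse (complex_of_real (sqrt 2))"
  have cc: "cnj c = c" by (simp add: c_def)
  have "(\<Sum>j. tangent b j * mat_apply Y x j) = l2_inner (\<lambda>j. c * Y j b) (mat_apply Y x)"
    by (simp add: l2_inner_def c_def flip: cnj_tangent[OF b])
  also have "\<dots> = c * mat_apply (gram Y) x b"
    by (simp add: l2_inner_scale_left bounded_op_col bounded_op_Y bounded_op_l2 x cc mat_apply_gram)
  also have "mat_apply (gram Y) x b = mat_apply (gram X) x b"
    using b by (simp add: mat_apply_gram_Y[OF x] tail_seq_def)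
  also have "c * \<dots> = l2_inner (\<lambda>j. c * X j b) (mat_apply X x)"
    by (simp add: l2_inner_scale_left bounded_op_col bounded_op_X bounded_op_l2 x cc mat_apply_gram)
  also have "(\<lambda>j. c * X j b) = tangent b"
    by (simp add: tangent_def c_def divide_inverse mult.commute fun_eq_iff)
  finally show ?thesis .
qed

lemma l2_proj_mat_row: "l2 (proj_mat W i)"
  unfolding proj_mat_def by (intro l2_sum l2_scale l2_tangent) simp_all

lemma hilbert_schmidt_proj_mat: "hilbert_schmidt (proj_mat W)"
  unfolding proj_mat_def
  by (intro hilbert_schmidt_sum hilbert_schmidt_rank_one l2_tangent l2_scale_right) simp_all

lemma hilbert_schmidt_M: "hilbert_schmidt (M W)"
proof -
  have "hilbert_schmidt (\<lambda>i j. imat_mult X (binv Y) i j + (-1) * proj_mat W i j)"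
    by (intro hilbert_schmidt_add hilbert_schmidt_scale hilbert_schmidt_proj_mat
        hilbert_schmidt_mult_bounded_op hilbert_schmidt_X bounded_op_binv_Y)
  thus ?thesis by (simp add: M_def[abs_def])
qed

lemma mat_apply_proj_mat:
  assumes y: "l2 y"
  shows "mat_apply (proj_mat W) y i = (\<Sum>a<k. tangent a i * (\<Sum>b<k. W a b * (\<Sum>j. tangent b j * y j)))"
proof -
  have s: "summable (\<lambda>j. tangent b j * y j)" for b by (rule summable_mult_l2[OF l2_tangent y])
  have "mat_apply (proj_mat W) y i = (\<Sum>j. \<Sum>a<k. \<Sum>b<k. tangent a i * W a b * (tangent b j * y j))"
    unfolding mat_apply_def proj_mat_def sum_distrib_right by (simp only: mult.assoc)
  also have "\<dots> = (\<Sum>a<k. \<Sum>b<k. tangent a i * W a b * (\<Sum>j. tangent b j * y j))"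
    by (simp add: suminf_sum summable_sum summable_mult s suminf_mult)
  also have "\<dots> = (\<Sum>a<k. tangent a i * (\<Sum>b<k. W a b * (\<Sum>j. tangent b j * y j)))"
    by (simp add: sum_distrib_left mult_ac)
  finally show ?thesis .
qed

lemma mat_apply_M:
  assumes y: "l2 y"
  shows "mat_apply (M W) y = proj_residual k tangent W (mat_apply X (mat_apply (binv Y) y))"
proof
  fix i
  define x where "x = mat_apply (binv Y) y"
  have x: "l2 x" unfolding x_def by (rule bounded_op_l2[OF bounded_op_binv_Y y])
  have y_eq: "y = mat_apply Y x" unfolding x_def by (rule Y_apply_binv_Y[OF y, symmetric])
  have XY: "mat_apply (imat_mult X (binv Y)) y = mat_apply X x"
    unfolding x_def by (rule mat_apply_imat_mult[OF hilbert_schmidt_row[OF hilbert_schmidt_X] bounded_op_binv_Y y])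
  have "mat_apply (M W) y i = mat_apply (imat_mult X (binv Y)) y i - mat_apply (proj_mat W) y i"
    unfolding mat_apply_def M_def left_diff_distrib
    by (intro suminf_diff[symmetric] summable_mult_l2 y l2_proj_mat_row
        hilbert_schmidt_row[OF hilbert_schmidt_mult_bounded_op[OF hilbert_schmidt_X bounded_op_binv_Y]])
  also have "\<dots> = proj_residual k tangent W (mat_apply X x) i"
  proof -
    have "(\<Sum>j. tangent b j * y j) = l2_inner (tangent b) (mat_apply X x)" if "b \<in> {..<k}" for b
      using that by (simp add: y_eq tangent_pairing[OF x])
    thus ?thesis unfolding XY mat_apply_proj_mat[OF y] proj_residual_def by simp
  qed
  finally show "mat_apply (M W) y i = proj_residual k tangent W (mat_apply X (mat_apply (binv Y) y)) i"
    by (simp add: x_def)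
qed

lemma M_annihilates_cnj_tangent:
  assumes W: "is_fin_inverse k tangent_gram W" and c: "c < k"
  shows "mat_apply (M W) (\<lambda>j. cnj (tangent c j)) = (\<lambda>i. 0)"
proof -
  define s where "s = inverse (complex_of_real (sqrt 2))"
  have u: "l2 (\<lambda>j. s * unit_seq c j)" by (rule l2_scale[OF l2_unit_seq])
  have "mat_apply Y (\<lambda>j. s * unit_seq c j) = (\<lambda>j. cnj (tangent c j))"
    unfolding mat_apply_scale[OF bounded_op_Y l2_unit_seq] mat_apply_unit_seq
    by (simp add: cnj_tangent[OF c] s_def)
  moreover have "mat_apply X (\<lambda>j. s * unit_seq c j) = tangent c"
    unfolding mat_apply_scale[OF bounded_op_X l2_unit_seq] mat_apply_unit_seq
    by (simp add: tangent_def s_def divide_inverse mult.commute fun_eq_iff)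
  ultimately have "mat_apply X (mat_apply (binv Y) (\<lambda>j. cnj (tangent c j))) = tangent c"
    using binv_Y_apply_Y[OF u] by metis
  hence "mat_apply (M W) (\<lambda>j. cnj (tangent c j)) = proj_residual k tangent W (tangent c)"
    by (simp add: mat_apply_M l2_cnj l2_tangent)
  also have "proj_residual k tangent W (tangent c) = (\<lambda>i. 0)"
  proof -
    have "{..<k} \<inter> {a. a = c} = {c}" using c by auto
    hence "tangent c = (\<lambda>i. \<Sum>a<k. tangent a i * of_bool (a = c))" by (simp add: fun_eq_iff)
    thus ?thesis
      using proj_residual_span_eq_0[OF l2_tangent W[unfolded tangent_gram_def[abs_def]]] by metis
  qed
  finally show ?thesis .
qed

lemma X_apply_tail_seq:
  assumes x: "l2 x"
  shows "mat_apply X (tail_seq k x) = (\<lambda>i. mat_apply X x i - (\<Sum>c<k. tangent c i * (of_real (sqrt 2) * x c)))"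
proof
  fix i
  have "tail_seq k x = (\<lambda>j. x j - trunc_seq k x j)" by (auto simp: tail_seq_def trunc_seq_def)
  hence "mat_apply X (tail_seq k x) i = mat_apply X x i - (\<Sum>l<k. X i l * x l)"
    by (simp add: mat_apply_diff[OF bounded_op_X x l2_trunc_seq] mat_apply_trunc_seq)
  thus "mat_apply X (tail_seq k x) i = mat_apply X x i - (\<Sum>c<k. tangent c i * (of_real (sqrt 2) * x c))"
    by (simp add: tangent_def)
qed

lemma mat_apply_M_tail:
  assumes W: "is_fin_inverse k tangent_gram W" and y: "l2 y"
  shows "mat_apply (M W) y = proj_residual k tangent W (mat_apply X (tail_seq k (mat_apply (binv Y) y)))"
proof -
  define x where "x = mat_apply (binv Y) y"
  define p where "p i = (\<Sum>c<k. tangent c i * (of_real (sqrt 2) * x c))" for i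
  have x: "l2 x" unfolding x_def by (rule bounded_op_l2[OF bounded_op_binv_Y y])
  have p: "l2 p" unfolding p_def by (intro l2_sum l2_scale_right l2_tangent) simp_all
  have "proj_residual k tangent W p = (\<lambda>i. 0)"
    unfolding p_def by (rule proj_residual_span_eq_0[OF l2_tangent W[unfolded tangent_gram_def[abs_def]]])
  thus ?thesis
    unfolding X_apply_tail_seq[OF x, folded p_def] x_def[symmetric] mat_apply_M[OF y]
    by (simp add: proj_residual_diff[OF l2_tangent bounded_op_l2[OF bounded_op_X x] p])
qed

lemma l2norm_sq_M_apply_le:
  assumes W: "is_fin_inverse k tangent_gram W" and y: "l2 y"
  shows "l2norm_sq (mat_apply (M W) y) \<le> (hs_norm_sq X + 1) / (hs_norm_sq X + 3) * l2norm_sq y"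
proof -
  define K where "K = hs_norm_sq X"
  define x where "x = mat_apply (binv Y) y"
  define t where "t = tail_seq k x"
  define m where "m = l2norm_sq (mat_apply (M W) y)"
  note W' = W[unfolded tangent_gram_def[abs_def]]
  have x: "l2 x" unfolding x_def by (rule bounded_op_l2[OF bounded_op_binv_Y y])
  have t: "l2 t" unfolding t_def by (rule l2_tail_seq[OF x])
  have le_Xx: "m \<le> l2norm_sq (mat_apply X x)"
    unfolding m_def mat_apply_M[OF y] x_def[symmetric]
    by (rule l2norm_sq_proj_residual_le[OF l2_tangent bounded_op_l2[OF bounded_op_X x] W'])
  have "m \<le> l2norm_sq (mat_apply X t)"
    unfolding m_def mat_apply_M_tail[OF W y] x_def[symmetric] t_def[symmetric]
    by (rule l2norm_sq_proj_residual_le[OF l2_tangent bounded_op_l2[OF bounded_op_X t] W'])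
  also have "\<dots> \<le> K * l2norm_sq t"
    unfolding K_def using hilbert_schmidt_apply[OF hilbert_schmidt_X t] by blast
  finally have le_t: "m \<le> K * l2norm_sq t" .
  have y_eq: "l2norm_sq y = l2norm_sq (mat_apply X x) + 2 * l2norm_sq t"
    using l2norm_sq_Y_apply[OF x] Y_apply_binv_Y[OF y] by (simp add: x_def t_def)
  have K: "0 \<le> K" unfolding K_def by (rule hs_norm_sq_nonneg[OF hilbert_schmidt_X])
  have "(K + 3) * m = (K + 1) * m + 2 * m" by (simp add: algebra_simps)
  also have "\<dots> \<le> (K + 1) * l2norm_sq (mat_apply X x) + 2 * (K * l2norm_sq t)"
    using mult_left_mono[OF le_Xx, of "K + 1"] le_t K by linarith
  also have "\<dots> \<le> (K + 1) * l2norm_sq y"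
    using l2norm_sq_nonneg[OF t] by (simp add: y_eq algebra_simps)
  finally show ?thesis using K by (simp add: m_def K_def field_simps)
qed

lemma op_norm_M_less_1:
  assumes "is_fin_inverse k tangent_gram W"
  shows "op_norm (M W) < 1"
proof -
  define K where "K = hs_norm_sq X"
  have K: "0 \<le> K" unfolding K_def by (rule hs_norm_sq_nonneg[OF hilbert_schmidt_X])
  have "op_norm (M W) \<le> sqrt ((K + 1) / (K + 3))"
    using K l2norm_sq_M_apply_le[OF assms] by (intro op_norm_le_sqrt) (simp_all add: K_def)
  also have "\<dots> < 1" using K by simp
  finally show ?thesis .
qed

end

section \<open>Lagrangian manifolds with complex germ\<close>

lemma lag_germ_at:
  fixes e :: "'k::finite \<Rightarrow> nat"
  assumes lg: "lag_germ e U P Q B C" and \<tau>: "\<tau> \<in> U"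
  shows "\<And>j. smooth_on U (\<lambda>\<sigma>. P \<sigma> j)" "\<And>j. smooth_on U (\<lambda>\<sigma>. Q \<sigma> j)"
    and "\<And>i a. a < CARD('k) \<Longrightarrow> B \<tau> i a = complex_of_real (pd (cdir e a) (\<lambda>\<sigma>. P \<sigma> i) \<tau>) \<and>
                                  C \<tau> i a = complex_of_real (pd (cdir e a) (\<lambda>\<sigma>. Q \<sigma> i) \<tau>)"
    and "\<And>l m. (\<Sum>j. cnj (C \<tau> j l) * B \<tau> j m - cnj (B \<tau> j l) * C \<tau> j m)
                     = \<i> * (if l = m \<and> CARD('k) \<le> l then 1 else 0)"
    and "hilbert_schmidt (\<lambda>i j. (C \<tau> i j + \<i> * B \<tau> i j) / complex_of_real (sqrt 2))"
    and "has_bounded_inverse (\<lambda>i j. (C \<tau> i j - \<i> * B \<tau> i j) / complex_of_real (sqrt 2))"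
proof -
  note L = lg[unfolded lag_germ_def Let_def]
  have smooth: "\<forall>j. smooth_on U (\<lambda>\<sigma>. P \<sigma> j) \<and> smooth_on U (\<lambda>\<sigma>. Q \<sigma> j)"
    using L by (elim conjE) assumption
  thus "\<And>j. smooth_on U (\<lambda>\<sigma>. P \<sigma> j)" "\<And>j. smooth_on U (\<lambda>\<sigma>. Q \<sigma> j)" by blast+
  show "\<And>i a. a < CARD('k) \<Longrightarrow> B \<tau> i a = complex_of_real (pd (cdir e a) (\<lambda>\<sigma>. P \<sigma> i) \<tau>) \<and>
                                  C \<tau> i a = complex_of_real (pd (cdir e a) (\<lambda>\<sigma>. Q \<sigma> i) \<tau>)"
    using L \<tau> by blast
  show "\<And>l m. (\<Sum>j. cnj (C \<tau> j l) * B \<tau> j m - cnj (B \<tau> j l) * C \<tau> j m)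
                     = \<i> * (if l = m \<and> CARD('k) \<le> l then 1 else 0)"
    using L \<tau> by blast
  have "\<forall>vs \<in> lists Basis. \<forall>\<tau> \<in> U.
        hilbert_schmidt (\<lambda>i j. ipd vs (\<lambda>\<sigma>. (C \<sigma> i j + \<i> * B \<sigma> i j) / complex_of_real (sqrt 2)) \<tau>)"
    using L by blast
  moreover have "[] \<in> lists (Basis :: (real^'k) set)" by simp
  ultimately have "hilbert_schmidt (\<lambda>i j. ipd [] (\<lambda>\<sigma>. (C \<sigma> i j + \<i> * B \<sigma> i j) / complex_of_real (sqrt 2)) \<tau>)"
    using \<tau> by blast
  thus "hilbert_schmidt (\<lambda>i j. (C \<tau> i j + \<i> * B \<tau> i j) / complex_of_real (sqrt 2))" by simp
  show "has_bounded_inverse (\<lambda>i j. (C \<tau> i j - \<i> * B \<tau> i j) / complex_of_real (sqrt 2))"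
    using L \<tau> by blast
qed

lemma lag_germ_complex_germ:
  fixes e :: "'k::finite \<Rightarrow> nat"
  assumes lg: "lag_germ e U P Q B C" and \<tau>: "\<tau> \<in> U"
  shows "complex_germ CARD('k) (\<lambda>i j. C \<tau> i j + \<i> * B \<tau> i j) (\<lambda>i j. C \<tau> i j - \<i> * B \<tau> i j)"
proof -
  define s where "s = complex_of_real (sqrt 2)"
  define X where "X i j = C \<tau> i j + \<i> * B \<tau> i j" for i j
  define Y where "Y i j = C \<tau> i j - \<i> * B \<tau> i j" for i j
  note germ = lag_germ_at[OF lg \<tau>, folded s_def X_def Y_def]
  have s: "s \<noteq> 0" by (simp add: s_def)
  have X_hs: "hilbert_schmidt X"
    using hilbert_schmidt_scale[OF germ(5), of s] s by simp
  obtain Z where "is_bounded_inverse (\<lambda>i j. Y i j / s) Z"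
    using germ(6) unfolding has_bounded_inverse_def by blast
  from is_bounded_inverse_scale[OF this s] have Y_inv: "has_bounded_inverse Y"
    using s by (auto simp: has_bounded_inverse_def)
  have Y: "bounded_op Y"
    using Y_inv by (auto simp: has_bounded_inverse_def is_bounded_inverse_def)
  have "gram Y l m - gram X l m = (if l = m \<and> CARD('k) \<le> l then 2 else 0)" for l m
    using gram_diff_conj_pair[of "C \<tau>" "B \<tau>", folded X_def Y_def,
        OF hilbert_schmidt_bounded_op[OF X_hs] Y, of l m]
    by (simp add: germ(4) mult.assoc)
  moreover have "cnj (X i a) = Y i a" if "a < CARD('k)" for i a
    using germ(3)[OF that, of i] by (simp add: X_def Y_def)
  ultimately show ?thesis
    unfolding X_def[symmetric] Y_def[symmetric]
    by unfold_locales (simp_all add: X_hs Y_inv algebra_simps)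
qed

lemma dphi_eq:
  fixes e :: "'k::finite \<Rightarrow> nat"
  assumes lg: "lag_germ e U P Q B C" and \<tau>: "\<tau> \<in> U" and a: "a < CARD('k)"
  shows "dphi e P Q a i \<tau> = (C \<tau> i a + \<i> * B \<tau> i a) / complex_of_real (sqrt 2)"
proof -
  let ?v = "cdir e a"
  have deriv: "((\<lambda>t. f (\<tau> + t *\<^sub>R ?v)) has_real_derivative pd ?v f \<tau>) (at 0)"
    if "smooth_on U f" for f :: "real^'k \<Rightarrow> real"
  proof -
    have "[] \<in> lists (Basis :: (real^'k) set)" "?v \<in> Basis" by (simp_all add: cdir_def)
    hence "(\<lambda>t::real. ipd [] f (\<tau> + t *\<^sub>R ?v)) differentiable (at 0)"
      using that \<tau> unfolding smooth_on_def by blast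
    thus ?thesis unfolding pd_def
      by (simp add: vector_derivative_works has_real_derivative_iff_has_vector_derivative)
  qed
  have "((\<lambda>t. phi P Q (\<tau> + t *\<^sub>R ?v) i) has_vector_derivative
      (complex_of_real (pd ?v (\<lambda>\<sigma>. Q \<sigma> i) \<tau>) + \<i> * complex_of_real (pd ?v (\<lambda>\<sigma>. P \<sigma> i) \<tau>))
        / complex_of_real (sqrt 2)) (at 0)"
    unfolding phi_def
    by (intro has_vector_derivative_divide has_vector_derivative_add has_vector_derivative_mult_right
        has_vector_derivative_of_real deriv lag_germ_at[OF lg \<tau>])
  hence "dphi e P Q a i \<tau> = (complex_of_real (pd ?v (\<lambda>\<sigma>. Q \<sigma> i) \<tau>)
      + \<i> * complex_of_real (pd ?v (\<lambda>\<sigma>. P \<sigma> i) \<tau>)) / complex_of_real (sqrt 2)"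
    unfolding dphi_def pd_def by (rule vector_derivative_at)
  thus ?thesis using lag_germ_at(3)[OF lg \<tau> a, of i] by simp
qed

theorem lemma2:
  fixes e :: "'k::finite \<Rightarrow> nat"
    and U :: "(real^'k) set"
    and P Q :: "real^'k \<Rightarrow> nat \<Rightarrow> real"
    and B C :: "real^'k \<Rightarrow> imat"
    and \<tau> :: "real^'k"
  assumes "lag_germ e U P Q B C"
    and "\<tau> \<in> U"
  shows "hilbert_schmidt (Mmat e P Q B C \<tau>) \<and>
         op_norm (Mmat e P Q B C \<tau>) < 1 \<and>
         (\<forall>a<CARD('k). \<forall>i. (\<Sum>j. Mmat e P Q B C \<tau> i j * cnj (dphi e P Q a j \<tau>)) = 0)"
proof -
  let ?k = "CARD('k)"
  interpret complex_germ ?k "\<lambda>i j. C \<tau> i j + \<i> * B \<tau> i j" "\<lambda>i j. C \<tau> i j - \<i> * B \<tau> i j"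
    by (rule lag_germ_complex_germ[OF assms])
  have dphi: "dphi e P Q a i \<tau> = tangent a i" if "a < ?k" for a i
    using dphi_eq[OF assms that] by (simp add: tangent_def)
  define W where "W = Wmat e P Q \<tau>"
  have M: "Mmat e P Q B C \<tau> = M W"
    by (simp add: Mmat_def M_def proj_mat_def W_def dphi fun_eq_iff)
  have W: "is_fin_inverse ?k tangent_gram W"
    unfolding W_def Wmat_def
    by (rule is_fin_inverse_tangent_gram) (simp_all add: dphi tangent_gram_def l2_inner_def)
  have "(\<Sum>j. M W i j * cnj (dphi e P Q a j \<tau>)) = 0" if "a < ?k" for a i
    using fun_cong[OF M_annihilates_cnj_tangent[OF W that], of i] by (simp add: mat_apply_def dphi that)
  thus ?thesis using hilbert_schmidt_M op_norm_M_less_1[OF W] by (simp add: M)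
qed

end
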